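(* Let $p,q$ be odd primes with $q\mid p-1$, and let $G=A\rtimes N$ and $G'=\widehat A\rtimes N$ be as in the context. Then $G$ and $G'$ are not isocategorical, i.e. $\mathrm{Rep}(G)$ and $\mathrm{Rep}(G')$ are not equivalent as tensor categories.
   Context: $k$ algebraically closed of characteristic $0$; $\mathrm{Rep}(G)$ is the tensor category of finite-dimensional representations of $G$ over $k$. $N=\mathbb Z/p\mathbb Z\rtimes\mathbb Z/q\mathbb Z$ is the non-abelian group of order $pq$, $A\cong\mathbb Z/p\mathbb Z$ its normal subgroup of order $p$; $N$ acts on $A$ by conjugation and on $\widehat A=\mathrm{Hom}(A,k^\times)$ by the induced action $(\rho\triangleleft n)(a)=\rho(a\triangleleft n^{-1})$; $G=A\rtimes N$, $G'=\widehat A\rtimes N$. *)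

theory Defs
  imports "Jordan_Normal_Form.Matrix"
begin

class alg_closed_field_char_0 = field_char_0 +
  assumes alg_closed: "0 < n \<Longrightarrow> \<exists>x::'a. x ^ n + (\<Sum>i<n. c i * x ^ i) = 0"

text \<open>N = Z/p \<rtimes> Z/q, elements (a,c), with
  (a,c)(a',c') = (a + r^c a', c + c'), r of multiplicative order q mod p.
  A = Z/p (the normal subgroup {(a,0)} of N), N acting by conjugation: (a,c).x = r^c x.
  The group X \<rtimes> N, X = Z/p, where (a,c) acts on X by multiplication by s^c,
  has elements (x,a,c) and multiplication below.  G uses s = r (conjugation action
  on A); G' uses s = r^(q-1) = r^(-1) mod p (induced action on the dual group).\<close>

definition sd_carrier :: "nat \<Rightarrow> nat \<Rightarrow> (nat \<times> nat \<times> nat) set" where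
  "sd_carrier p q = {(x, a, c). x < p \<and> a < p \<and> c < q}"

definition sd_mult :: "nat \<Rightarrow> nat \<Rightarrow> nat \<Rightarrow> nat \<Rightarrow>
    nat \<times> nat \<times> nat \<Rightarrow> nat \<times> nat \<times> nat \<Rightarrow> nat \<times> nat \<times> nat" where
  "sd_mult p q r s g h =
     (case g of (x, a, c) \<Rightarrow> case h of (x', a', c') \<Rightarrow>
       ((x + s ^ c * x') mod p, (a + r ^ c * a') mod p, (c + c') mod q))"

definition sd_one :: "nat \<times> nat \<times> nat" where
  "sd_one = (0, 0, 0)"

definition kron :: "'a::semiring_1 mat \<Rightarrow> 'a mat \<Rightarrow> 'a mat" where
  "kron A B = mat (dim_row A * dim_row B) (dim_col A * dim_col B)
     (\<lambda>(i, j). A $$ (i div dim_row B, j div dim_col B) * B $$ (i mod dim_row B, j mod dim_col B))"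

text \<open>The tensor category Rep(G) of finite-dimensional representations of a finite group
  (carrier Gc, multiplication mul, unit e) over k: an object is (n, \<rho>) with
  \<rho> : G \<rightarrow> GL_n(k) a homomorphism; morphisms are intertwiners (matrices);
  composition is matrix product; tensor product is the Kronecker product, unit object
  the trivial 1-dimensional representation.  This monoidal structure is strict
  (associativity and unit constraints are identities).\<close>

type_synonym ('g, 'k) rep = "nat \<times> ('g \<Rightarrow> 'k mat)"

definition rep_obj :: "'g set \<Rightarrow> ('g \<Rightarrow> 'g \<Rightarrow> 'g) \<Rightarrow> 'g \<Rightarrow> ('g, 'k::field) rep set" where
  "rep_obj Gc mul e = {(n, \<rho>). (\<forall>g\<in>Gc. \<rho> g \<in> carrier_mat n n) \<and> \<rho> e = 1\<^sub>m n \<and>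
       (\<forall>g\<in>Gc. \<forall>h\<in>Gc. \<rho> (mul g h) = \<rho> g * \<rho> h)}"

definition rep_hom :: "'g set \<Rightarrow> ('g, 'k::field) rep \<Rightarrow> ('g, 'k) rep \<Rightarrow> 'k mat set" where
  "rep_hom Gc X Y = {T. T \<in> carrier_mat (fst Y) (fst X) \<and> (\<forall>g\<in>Gc. T * snd X g = snd Y g * T)}"

definition rep_tensor :: "('g, 'k::field) rep \<Rightarrow> ('g, 'k) rep \<Rightarrow> ('g, 'k) rep" where
  "rep_tensor X Y = (fst X * fst Y, \<lambda>g. kron (snd X g) (snd Y g))"

definition rep_unit :: "('g, 'k::field) rep" where
  "rep_unit = (1, \<lambda>g. 1\<^sub>m 1)"

definition rep_iso :: "'g set \<Rightarrow> ('g, 'k::field) rep \<Rightarrow> ('g, 'k) rep \<Rightarrow> 'k mat \<Rightarrow> bool" where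
  "rep_iso Gc X Y T \<longleftrightarrow> T \<in> rep_hom Gc X Y \<and>
     (\<exists>S\<in>rep_hom Gc Y X. S * T = 1\<^sub>m (fst X) \<and> T * S = 1\<^sub>m (fst Y))"

definition tensor_equivalence ::
  "'g set \<Rightarrow> ('g \<Rightarrow> 'g \<Rightarrow> 'g) \<Rightarrow> 'g \<Rightarrow> 'h set \<Rightarrow> ('h \<Rightarrow> 'h \<Rightarrow> 'h) \<Rightarrow> 'h \<Rightarrow>
   (('g, 'k::field) rep \<Rightarrow> ('h, 'k) rep) \<Rightarrow>
   (('g, 'k) rep \<Rightarrow> ('g, 'k) rep \<Rightarrow> 'k mat \<Rightarrow> 'k mat) \<Rightarrow>
   (('g, 'k) rep \<Rightarrow> ('g, 'k) rep \<Rightarrow> 'k mat) \<Rightarrow> 'k mat \<Rightarrow> bool" where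
  "tensor_equivalence G1 m1 e1 G2 m2 e2 F Fm J \<phi> \<longleftrightarrow>
     (let Ob1 = rep_obj G1 m1 e1; Ob2 = rep_obj G2 m2 e2 in
     \<comment> \<open>functor\<close>
     (\<forall>X\<in>Ob1. F X \<in> Ob2) \<and>
     (\<forall>X\<in>Ob1. \<forall>Y\<in>Ob1. \<forall>T\<in>rep_hom G1 X Y. Fm X Y T \<in> rep_hom G2 (F X) (F Y)) \<and>
     (\<forall>X\<in>Ob1. Fm X X (1\<^sub>m (fst X)) = 1\<^sub>m (fst (F X))) \<and>
     (\<forall>X\<in>Ob1. \<forall>Y\<in>Ob1. \<forall>Z\<in>Ob1. \<forall>T\<in>rep_hom G1 X Y. \<forall>S\<in>rep_hom G1 Y Z.
        Fm X Z (S * T) = Fm Y Z S * Fm X Y T) \<and>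
     \<comment> \<open>k-linear\<close>
     (\<forall>X\<in>Ob1. \<forall>Y\<in>Ob1. \<forall>T\<in>rep_hom G1 X Y. \<forall>T'\<in>rep_hom G1 X Y. \<forall>c.
        Fm X Y (T + T') = Fm X Y T + Fm X Y T' \<and> Fm X Y (c \<cdot>\<^sub>m T) = c \<cdot>\<^sub>m Fm X Y T) \<and>
     \<comment> \<open>tensor structure J : natural isomorphism\<close>
     (\<forall>X\<in>Ob1. \<forall>Y\<in>Ob1. rep_iso G2 (rep_tensor (F X) (F Y)) (F (rep_tensor X Y)) (J X Y)) \<and>
     (\<forall>X\<in>Ob1. \<forall>X'\<in>Ob1. \<forall>Y\<in>Ob1. \<forall>Y'\<in>Ob1. \<forall>T\<in>rep_hom G1 X X'. \<forall>S\<in>rep_hom G1 Y Y'.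
        J X' Y' * kron (Fm X X' T) (Fm Y Y' S)
          = Fm (rep_tensor X Y) (rep_tensor X' Y') (kron T S) * J X Y) \<and>
     \<comment> \<open>associativity coherence (associativity constraints are identities)\<close>
     (\<forall>X\<in>Ob1. \<forall>Y\<in>Ob1. \<forall>Z\<in>Ob1.
        J (rep_tensor X Y) Z * kron (J X Y) (1\<^sub>m (fst (F Z)))
          = J X (rep_tensor Y Z) * kron (1\<^sub>m (fst (F X))) (J Y Z)) \<and>
     \<comment> \<open>unit: \<phi> : 1 \<rightarrow> F 1 isomorphism, unit coherences (unit constraints are identities)\<close>
     rep_iso G2 rep_unit (F rep_unit) \<phi> \<and>
     (\<forall>X\<in>Ob1. J rep_unit X * kron \<phi> (1\<^sub>m (fst (F X))) = 1\<^sub>m (fst (F X)) \<and>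
               J X rep_unit * kron (1\<^sub>m (fst (F X))) \<phi> = 1\<^sub>m (fst (F X))) \<and>
     \<comment> \<open>equivalence: fully faithful and essentially surjective\<close>
     (\<forall>X\<in>Ob1. \<forall>Y\<in>Ob1. bij_betw (Fm X Y) (rep_hom G1 X Y) (rep_hom G2 (F X) (F Y))) \<and>
     (\<forall>Z\<in>Ob2. \<exists>X\<in>Ob1. \<exists>T. rep_iso G2 (F X) Z T))"

definition tensor_equivalent_Rep ::
  "'k::field itself \<Rightarrow> 'g set \<Rightarrow> ('g \<Rightarrow> 'g \<Rightarrow> 'g) \<Rightarrow> 'g \<Rightarrow> 'h set \<Rightarrow> ('h \<Rightarrow> 'h \<Rightarrow> 'h) \<Rightarrow> 'h \<Rightarrow> bool" where
  "tensor_equivalent_Rep (TYPE('k)) G1 m1 e1 G2 m2 e2 \<longleftrightarrow>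
     (\<exists>(F :: ('g, 'k) rep \<Rightarrow> ('h, 'k) rep) Fm J \<phi>.
        tensor_equivalence G1 m1 e1 G2 m2 e2 F Fm J \<phi>)"

end

theory Submission
  imports Defs "HOL-Number_Theory.Pocklington"
begin

(* Both groups are V \<rtimes> C with V = {(x, a, 0)} = (Z/p)^2 and C = {(0, 0, c)} cyclic of order q;
   a generator of C acts on V by (x, a) \<mapsto> (r x, r a) in G and by (x, a) \<mapsto> (r^-1 x, r a) in G'.
   A tensor equivalence preserves separated triples: objects X_0, X_1, X_2 with End X_i scalar,
   End (X_i \<otimes> X_i) not scalar, and Hom(1, X_i \<otimes> X_j^n) = 0 for all n and i \<noteq> j
   (X_j^n the tensor power).
   In Rep(G), the representations induced from the characters (1, 0), (0, 1), (1, 1) of V form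
   one: C acts on V by scalars, so the weights of X_j^n lie on one line, and an element of V
   orthogonal to that line acts trivially on X_j^n but without fixed vectors on X_i.
   In Rep(G') there is none: each X_i has a weight vector of some nonzero weight w_i, and as
   r \<noteq> r^-1 modulo p, for two of the three weights w_i is cancelled modulo p by a combination
   of w_j and its image under C.  The corresponding tensor product of weight vectors in
   X_i \<otimes> X_j^n is fixed by V, and its average over C is a nonzero invariant vector. *)

section \<open>Kronecker products\<close>

lemma mult_add_less_mult: "i < a \<Longrightarrow> j < b \<Longrightarrow> i * b + j < a * (b::nat)"
proof -
  assume "i < a" "j < b"
  then have "i * b + j < (i + 1) * b" by simp
  also have "\<dots> \<le> a * b" using \<open>i < a\<close> by (intro mult_right_mono) auto
  finally show ?thesis .
qed

lemma sum_lessThan_mult_div_mod: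
  fixes f :: "nat \<Rightarrow> nat \<Rightarrow> 'a::comm_monoid_add"
  shows "(\<Sum>l<a * b. f (l div b) (l mod b)) = (\<Sum>i<a. \<Sum>j<b. f i j)"
proof (cases "b = 0")
  case False
  have "(\<Sum>i<a. \<Sum>j<b. f i j) = (\<Sum>(i, j)\<in>{..<a} \<times> {..<b}. f i j)"
    by (simp add: sum.cartesian_product)
  also have "\<dots> = (\<Sum>l<a * b. f (l div b) (l mod b))"
    by (rule sum.reindex_bij_witness[where i = "\<lambda>l. (l div b, l mod b)" and j = "\<lambda>(i, j). i * b + j"])
      (use False in \<open>auto simp: less_mult_imp_div_less mult_add_less_mult\<close>)
  finally show ?thesis by simp
qed simp

lemma mod_less_of_less_mult: "i < a * (b::nat) \<Longrightarrow> i mod b < b"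
  by (cases "b = 0") auto

lemma dim_row_kron [simp]: "dim_row (kron A B) = dim_row A * dim_row B"
  and dim_col_kron [simp]: "dim_col (kron A B) = dim_col A * dim_col B"
  by (simp_all add: kron_def)

lemma index_kron:
  "i < dim_row A * dim_row B \<Longrightarrow> j < dim_col A * dim_col B \<Longrightarrow>
   kron A B $$ (i, j) = A $$ (i div dim_row B, j div dim_col B) * B $$ (i mod dim_row B, j mod dim_col B)"
  by (simp add: kron_def)

lemma kron_carrier_mat [simp, intro]:
  "A \<in> carrier_mat n1 m1 \<Longrightarrow> B \<in> carrier_mat n2 m2 \<Longrightarrow> kron A B \<in> carrier_mat (n1 * n2) (m1 * m2)"
  by (metis carrier_matD carrier_matI dim_row_kron dim_col_kron)

lemma kron_mult_kron:
  fixes A B C D :: "'a::comm_semiring_1 mat"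
  assumes A: "A \<in> carrier_mat n1 k1" and C: "C \<in> carrier_mat k1 m1"
    and B: "B \<in> carrier_mat n2 k2" and D: "D \<in> carrier_mat k2 m2"
  shows "kron A B * kron C D = kron (A * C) (B * D)"
proof (rule eq_matI)
  fix i j assume "i < dim_row (kron (A * C) (B * D))" "j < dim_col (kron (A * C) (B * D))"
  then have i: "i < n1 * n2" and j: "j < m1 * m2" using A B C D by auto
  have "(kron A B * kron C D) $$ (i, j) = (\<Sum>l<k1 * k2. kron A B $$ (i, l) * kron C D $$ (l, j))"
    using A B C D i j by (simp add: index_mult_mat scalar_prod_def atLeast0LessThan)
  also have "\<dots> = (\<Sum>l<k1 * k2. (A $$ (i div n2, l div k2) * B $$ (i mod n2, l mod k2)) *
      (C $$ (l div k2, j div m2) * D $$ (l mod k2, j mod m2)))"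
    using A B C D i j by (intro sum.cong refl) (simp add: index_kron)
  also have "\<dots> = (\<Sum>l1<k1. \<Sum>l2<k2. (A $$ (i div n2, l1) * B $$ (i mod n2, l2)) *
      (C $$ (l1, j div m2) * D $$ (l2, j mod m2)))"
    by (rule sum_lessThan_mult_div_mod)
  also have "\<dots> = (\<Sum>l1<k1. A $$ (i div n2, l1) * C $$ (l1, j div m2)) *
      (\<Sum>l2<k2. B $$ (i mod n2, l2) * D $$ (l2, j mod m2))"
    by (simp add: sum_product mult_ac)
  also have "\<dots> = kron (A * C) (B * D) $$ (i, j)"
    using A B C D i j less_mult_imp_div_less[OF i] mod_less_of_less_mult[OF i]
      less_mult_imp_div_less[OF j] mod_less_of_less_mult[OF j]
    by (simp add: index_kron index_mult_mat scalar_prod_def atLeast0LessThan)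
  finally show "(kron A B * kron C D) $$ (i, j) = kron (A * C) (B * D) $$ (i, j)" .
qed (use A B C D in auto)

lemma kron_one_mat: "kron (1\<^sub>m a) (1\<^sub>m b) = (1\<^sub>m (a * b) :: 'a::semiring_1 mat)"
proof (rule eq_matI)
  fix i j assume "i < dim_row (1\<^sub>m (a * b) :: 'a mat)" "j < dim_col (1\<^sub>m (a * b) :: 'a mat)"
  then have i: "i < a * b" and j: "j < a * b" by auto
  have "(i div b = j div b \<and> i mod b = j mod b) = (i = j)"
    by (metis div_mult_mod_eq)
  then show "kron (1\<^sub>m a) (1\<^sub>m b) $$ (i, j) = (1\<^sub>m (a * b) :: 'a mat) $$ (i, j)"
    using i j less_mult_imp_div_less[OF i] mod_less_of_less_mult[OF i]
      less_mult_imp_div_less[OF j] mod_less_of_less_mult[OF j]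
    by (auto simp: index_kron)
qed auto

lemma kron_smult_left: "kron (c \<cdot>\<^sub>m A) B = c \<cdot>\<^sub>m kron A (B :: 'a::comm_ring_1 mat)"
  by (rule eq_matI) (auto simp: index_kron less_mult_imp_div_less mod_less_of_less_mult mult_ac)

lemma kron_smult_right: "kron A (c \<cdot>\<^sub>m B) = c \<cdot>\<^sub>m kron A (B :: 'a::comm_ring_1 mat)"
  by (rule eq_matI) (auto simp: index_kron less_mult_imp_div_less mod_less_of_less_mult mult_ac)

lemma col_nonzero_entry:
  assumes "u \<in> carrier_mat n 1" "u \<noteq> 0\<^sub>m n 1"
  obtains i where "i < n" "u $$ (i, 0) \<noteq> 0"
proof -
  have "\<exists>i<n. u $$ (i, 0) \<noteq> 0"
  proof (rule ccontr)
    assume "\<not> (\<exists>i<n. u $$ (i, 0) \<noteq> 0)"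
    then have "u = 0\<^sub>m n 1" using assms(1) by (intro eq_matI) auto
    then show False using assms(2) by simp
  qed
  then show ?thesis using that by blast
qed

lemma kron_col_nonzero:
  fixes u v :: "'a::{semiring_1, semiring_no_zero_divisors} mat"
  assumes u: "u \<in> carrier_mat n 1" "u \<noteq> 0\<^sub>m n 1" and v: "v \<in> carrier_mat m 1" "v \<noteq> 0\<^sub>m m 1"
  shows "kron u v \<noteq> 0\<^sub>m (n * m) 1"
proof
  obtain i where i: "i < n" "u $$ (i, 0) \<noteq> 0" using col_nonzero_entry[OF u] .
  obtain j where j: "j < m" "v $$ (j, 0) \<noteq> 0" using col_nonzero_entry[OF v] .
  have ij: "i * m + j < n * m" using i j by (simp add: mult_add_less_mult)
  assume "kron u v = 0\<^sub>m (n * m) 1"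
  then have "kron u v $$ (i * m + j, 0) = 0" using ij by simp
  moreover have "kron u v $$ (i * m + j, 0) = u $$ (i, 0) * v $$ (j, 0)"
    using u v ij j by (simp add: index_kron)
  ultimately show False using i j by simp
qed

lemma kron_mat_diag_one:
  "kron (mat_diag n d) (1\<^sub>m m) = (mat_diag (n * m) (\<lambda>l. d (l div m)) :: 'a::semiring_1 mat)"
proof (rule eq_matI)
  fix i j assume "i < dim_row (mat_diag (n * m) (\<lambda>l. d (l div m)) :: 'a mat)"
    "j < dim_col (mat_diag (n * m) (\<lambda>l. d (l div m)) :: 'a mat)"
  then have i: "i < n * m" and j: "j < n * m" by (auto simp: mat_diag_def)
  have "(i div m = j div m \<and> i mod m = j mod m) = (i = j)" by (metis div_mult_mod_eq)
  then show "kron (mat_diag n d) (1\<^sub>m m) $$ (i, j) = mat_diag (n * m) (\<lambda>l. d (l div m)) $$ (i, j)"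
    using i j less_mult_imp_div_less[OF i] less_mult_imp_div_less[OF j]
      mod_less_of_less_mult[OF i] mod_less_of_less_mult[OF j]
    by (auto simp: index_kron mat_diag_def)
qed (auto simp: mat_diag_def)

fun kron_pow :: "'a::semiring_1 mat \<Rightarrow> nat \<Rightarrow> 'a mat \<Rightarrow> 'a mat" where
  "kron_pow y 0 Q = Q"
| "kron_pow y (Suc k) Q = kron y (kron_pow y k Q)"

lemma kron_pow_nonzero:
  fixes y Q :: "'a::{semiring_1, semiring_no_zero_divisors} mat"
  assumes y: "y \<in> carrier_mat n 1" "y \<noteq> 0\<^sub>m n 1" and Q: "Q \<in> carrier_mat m 1" "Q \<noteq> 0\<^sub>m m 1"
  shows "kron_pow y k Q \<in> carrier_mat (n ^ k * m) 1 \<and> kron_pow y k Q \<noteq> 0\<^sub>m (n ^ k * m) 1"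
proof (induction k)
  case (Suc k)
  then show ?case using kron_col_nonzero[OF y, of "kron_pow y k Q" "n ^ k * m"] kron_carrier_mat[OF y(1), of "kron_pow y k Q"]
    by (simp add: mult.assoc)
qed (use Q in simp)

lemma smult_smult_mat: "a \<cdot>\<^sub>m (b \<cdot>\<^sub>m A) = (a * b :: 'a::semigroup_mult) \<cdot>\<^sub>m A"
  by (rule eq_matI) (auto simp: mult.assoc)

lemma one_smult_mat: "(1 :: 'a::monoid_mult) \<cdot>\<^sub>m A = A"
  by (rule eq_matI) auto

lemma smult_mat_cancel:
  fixes c :: "'a::field"
  assumes "c \<noteq> 0" and "c \<cdot>\<^sub>m A = c \<cdot>\<^sub>m B"
  shows "A = B"
proof -
  have "inverse c \<cdot>\<^sub>m (c \<cdot>\<^sub>m A) = inverse c \<cdot>\<^sub>m (c \<cdot>\<^sub>m B)" using assms(2) by simp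
  then show ?thesis using assms(1) by (simp add: smult_smult_mat one_smult_mat)
qed

lemma sum_delta_mult_left:
  fixes f :: "nat \<Rightarrow> 'a::semiring_0"
  shows "k < n \<Longrightarrow> (\<Sum>l<n. (if l = k then y l else 0) * f l) = y k * f k"
  by (simp add: if_distrib[of "\<lambda>t. t * _"] cong: if_cong)

lemma sum_delta_mult_right:
  fixes f :: "nat \<Rightarrow> 'a::semiring_0"
  shows "k < n \<Longrightarrow> (\<Sum>l<n. f l * (if l = k then y l else 0)) = f k * y k"
  by (simp add: if_distrib[of "\<lambda>t. _ * t"] cong: if_cong)

lemma sum_swap_inner:
  "(\<Sum>b\<in>B. \<Sum>x\<in>C. \<Sum>a\<in>D. g b x a) = (\<Sum>x\<in>C. \<Sum>a\<in>D. \<Sum>b\<in>B. (g b x a :: 'a::comm_monoid_add))"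
  by (subst sum.swap) (simp only: sum.swap[of _ B D])

lemma sum_swap_pairs:
  "(\<Sum>\<alpha>\<in>A. \<Sum>\<beta>\<in>B. \<Sum>x\<in>C. \<Sum>a\<in>D. g \<alpha> \<beta> x a) =
    (\<Sum>x\<in>C. \<Sum>a\<in>D. \<Sum>\<alpha>\<in>A. \<Sum>\<beta>\<in>B. (g \<alpha> \<beta> x a :: 'a::comm_monoid_add))"
proof -
  have "(\<Sum>\<alpha>\<in>A. \<Sum>\<beta>\<in>B. \<Sum>x\<in>C. \<Sum>a\<in>D. g \<alpha> \<beta> x a) = (\<Sum>\<alpha>\<in>A. \<Sum>x\<in>C. \<Sum>a\<in>D. \<Sum>\<beta>\<in>B. g \<alpha> \<beta> x a)"
    by (rule sum.cong[OF refl], rule sum_swap_inner)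
  also have "\<dots> = (\<Sum>x\<in>C. \<Sum>a\<in>D. \<Sum>\<alpha>\<in>A. \<Sum>\<beta>\<in>B. g \<alpha> \<beta> x a)"
    by (rule sum_swap_inner)
  finally show ?thesis .
qed

lemma sum_if_dvd_mult:
  fixes g :: "nat \<Rightarrow> 'a::semiring_1"
  assumes "0 < p"
  shows "(\<Sum>a<p. (if p dvd a then c else 0) * g a) = c * g 0"
proof -
  have "(\<Sum>a<p. (if p dvd a then c else 0) * g a) = (\<Sum>a<p. if a = 0 then c * g a else 0)"
    by (intro sum.cong refl) (auto dest: dvd_imp_le)
  then show ?thesis using assms by simp
qed

lemma sum_lessThan_shift_mod:
  fixes n x0 :: nat
  assumes n: "0 < n"
  shows "(\<Sum>x<n. h ((x0 + x) mod n)) = (\<Sum>x<n. h x)"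
proof -
  have "bij_betw (\<lambda>x. (x0 + x) mod n) {..<n} {..<n}"
  proof (rule bij_betw_imageI)
    show "inj_on (\<lambda>x. (x0 + x) mod n) {..<n}"
    proof (rule inj_onI)
      fix x y assume "x \<in> {..<n}" "y \<in> {..<n}" "(x0 + x) mod n = (x0 + y) mod n"
      then have "[x0 + x = x0 + y] (mod n)" "x < n" "y < n" by (simp_all only: cong_def) simp_all
      then show "x = y" by (simp add: cong_add_lcancel_nat cong_less_imp_eq_nat)
    qed
    then show "(\<lambda>x. (x0 + x) mod n) ` {..<n} = {..<n}"
      using n by (intro endo_inj_surj) auto
  qed
  then show ?thesis by (rule sum.reindex_bij_betw)
qed

lemma lincomb_mat_mult:
  fixes c :: "'x \<Rightarrow> 'y \<Rightarrow> 'a::comm_semiring_0"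
  assumes A: "\<And>x y. x \<in> S \<Longrightarrow> y \<in> T \<Longrightarrow> A x y \<in> carrier_mat n n"
    and M: "M \<in> carrier_mat n m" and ij: "i < n" "j < m"
  shows "(mat n n (\<lambda>(i, j). \<Sum>x\<in>S. \<Sum>y\<in>T. c x y * A x y $$ (i, j)) * M) $$ (i, j) =
    (\<Sum>x\<in>S. \<Sum>y\<in>T. c x y * (A x y * M) $$ (i, j))"
proof -
  have "(mat n n (\<lambda>(i, j). \<Sum>x\<in>S. \<Sum>y\<in>T. c x y * A x y $$ (i, j)) * M) $$ (i, j) =
      (\<Sum>k<n. \<Sum>x\<in>S. \<Sum>y\<in>T. c x y * (A x y $$ (i, k) * M $$ (k, j)))"
    using M ij by (simp add: index_mult_mat scalar_prod_def atLeast0LessThan sum_distrib_right mult.assoc)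
  also have "\<dots> = (\<Sum>x\<in>S. \<Sum>y\<in>T. \<Sum>k<n. c x y * (A x y $$ (i, k) * M $$ (k, j)))"
    by (subst sum.swap) (simp add: sum.swap[of _ "{..<n}"])
  also have "\<dots> = (\<Sum>x\<in>S. \<Sum>y\<in>T. c x y * (A x y * M) $$ (i, j))"
    using carrier_matD[OF A] M ij
    by (intro sum.cong refl) (simp add: index_mult_mat scalar_prod_def atLeast0LessThan sum_distrib_left)
  finally show ?thesis .
qed

lemma mult_lincomb_mat:
  fixes c :: "'x \<Rightarrow> 'y \<Rightarrow> 'a::comm_semiring_0"
  assumes A: "\<And>x y. x \<in> S \<Longrightarrow> y \<in> T \<Longrightarrow> A x y \<in> carrier_mat n n"
    and M: "M \<in> carrier_mat m n" and ij: "i < m" "j < n"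
  shows "(M * mat n n (\<lambda>(i, j). \<Sum>x\<in>S. \<Sum>y\<in>T. c x y * A x y $$ (i, j))) $$ (i, j) =
    (\<Sum>x\<in>S. \<Sum>y\<in>T. c x y * (M * A x y) $$ (i, j))"
proof -
  have "(M * mat n n (\<lambda>(i, j). \<Sum>x\<in>S. \<Sum>y\<in>T. c x y * A x y $$ (i, j))) $$ (i, j) =
      (\<Sum>k<n. \<Sum>x\<in>S. \<Sum>y\<in>T. c x y * (M $$ (i, k) * A x y $$ (k, j)))"
    using M ij by (simp add: index_mult_mat scalar_prod_def atLeast0LessThan sum_distrib_left mult_ac)
  also have "\<dots> = (\<Sum>x\<in>S. \<Sum>y\<in>T. \<Sum>k<n. c x y * (M $$ (i, k) * A x y $$ (k, j)))"
    by (subst sum.swap) (simp add: sum.swap[of _ "{..<n}"])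
  also have "\<dots> = (\<Sum>x\<in>S. \<Sum>y\<in>T. c x y * (M * A x y) $$ (i, j))"
    using carrier_matD[OF A] M ij
    by (intro sum.cong refl) (simp add: index_mult_mat scalar_prod_def atLeast0LessThan sum_distrib_left)
  finally show ?thesis .
qed

lemma unit_col_mult:
  assumes "A \<in> carrier_mat m n" "i < m" "k < n"
  shows "(A * mat n 1 (\<lambda>(l, _). if l = k then 1 else 0)) $$ (i, 0) = (A $$ (i, k) :: 'a::semiring_1)"
  using assms by (simp add: index_mult_mat scalar_prod_def atLeast0LessThan sum_delta_mult_right)

definition col_sum :: "nat \<Rightarrow> (nat \<Rightarrow> 'a::comm_monoid_add mat) \<Rightarrow> nat \<Rightarrow> 'a mat" where
  "col_sum n f C = mat n 1 (\<lambda>(l, _). \<Sum>c<C. f c $$ (l, 0))"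

lemma col_sum_carrier [simp]: "col_sum n f C \<in> carrier_mat n 1"
  by (simp add: col_sum_def)

lemma mult_col_sum:
  fixes A :: "'a::comm_semiring_0 mat"
  assumes A: "A \<in> carrier_mat m n" and f: "\<And>c. c < C \<Longrightarrow> f c \<in> carrier_mat n 1"
  shows "A * col_sum n f C = col_sum m (\<lambda>c. A * f c) C"
proof (rule eq_matI)
  fix i j assume "i < dim_row (col_sum m (\<lambda>c. A * f c) C)" "j < dim_col (col_sum m (\<lambda>c. A * f c) C)"
  then have i: "i < m" and j: "j = 0" by (auto simp: col_sum_def)
  have "(A * col_sum n f C) $$ (i, 0) = (\<Sum>k<n. \<Sum>c<C. A $$ (i, k) * f c $$ (k, 0))"
    using A i by (simp add: index_mult_mat scalar_prod_def atLeast0LessThan col_sum_def sum_distrib_left)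
  also have "\<dots> = (\<Sum>c<C. (A * f c) $$ (i, 0))"
  proof (subst sum.swap, intro sum.cong refl)
    fix c assume "c \<in> {..<C}"
    then have "f c \<in> carrier_mat n 1" using f by simp
    then show "(\<Sum>k<n. A $$ (i, k) * f c $$ (k, 0)) = (A * f c) $$ (i, 0)"
      using A i by (simp add: index_mult_mat scalar_prod_def atLeast0LessThan)
  qed
  finally show "(A * col_sum n f C) $$ (i, j) = col_sum m (\<lambda>c. A * f c) C $$ (i, j)"
    using i j by (simp add: col_sum_def)
qed (use A in \<open>auto simp: col_sum_def\<close>)

lemma mat_diag_fixed_col_zero:
  fixes v :: "'a::idom mat"
  assumes v: "v \<in> carrier_mat n 1" and fixed: "mat_diag n d * v = v" and d: "\<And>i. i < n \<Longrightarrow> d i \<noteq> 1"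
  shows "v = 0\<^sub>m n 1"
proof (rule eq_matI)
  fix i j assume "i < dim_row (0\<^sub>m n 1 :: 'a mat)" "j < dim_col (0\<^sub>m n 1 :: 'a mat)"
  then have i: "i < n" and j: "j = 0" by auto
  have "d i * v $$ (i, 0) = v $$ (i, 0)"
    using arg_cong[OF fixed, of "\<lambda>M. M $$ (i, 0)"] v i by (simp add: mat_diag_mult_left[OF v])
  then have "(d i - 1) * v $$ (i, 0) = 0" by (simp add: algebra_simps)
  then show "v $$ (i, j) = 0\<^sub>m n 1 $$ (i, j)" using d[OF i] i j by simp
qed (use v in auto)

lemma commute_mat_diag_imp_diag:
  fixes T :: "'a::idom mat"
  assumes T: "T \<in> carrier_mat n n" and comm: "T * mat_diag n d = mat_diag n d * T"
    and distinct: "\<And>i k. i < n \<Longrightarrow> k < n \<Longrightarrow> i \<noteq> k \<Longrightarrow> d i \<noteq> d k"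
  shows "T = mat_diag n (\<lambda>i. T $$ (i, i))"
proof (rule eq_matI)
  fix i k assume "i < dim_row (mat_diag n (\<lambda>i. T $$ (i, i)))" "k < dim_col (mat_diag n (\<lambda>i. T $$ (i, i)))"
  then have i: "i < n" and k: "k < n" by (auto simp: mat_diag_def)
  have "T $$ (i, k) * d k = d i * T $$ (i, k)"
    using arg_cong[OF comm, of "\<lambda>M. M $$ (i, k)"] T i k
    by (simp add: mat_diag_mult_left[OF T] mat_diag_mult_right[OF T])
  then have "T $$ (i, k) * (d k - d i) = 0" by (simp add: algebra_simps)
  then show "T $$ (i, k) = mat_diag n (\<lambda>i. T $$ (i, i)) $$ (i, k)"
    using distinct[OF i k] i k by (cases "i = k") (auto simp: mat_diag_def)
qed (use T in \<open>auto simp: mat_diag_def\<close>)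

definition monomial_mat :: "nat \<Rightarrow> nat \<Rightarrow> (nat \<Rightarrow> 'a::zero) \<Rightarrow> 'a mat" where
  "monomial_mat n c f = mat n n (\<lambda>(i, j). if i = (j + c) mod n then f i else 0)"

lemma monomial_mat_carrier [simp]: "monomial_mat n c f \<in> carrier_mat n n"
  by (simp add: monomial_mat_def)

lemma monomial_mat_mult:
  fixes f g :: "nat \<Rightarrow> 'a::semiring_0"
  shows "monomial_mat n c f * monomial_mat n c' g =
    mat n n (\<lambda>(i, j). if i = (j + c' + c) mod n then f i * g ((j + c') mod n) else 0)"
proof (rule eq_matI)
  fix i j assume "i < dim_row (mat n n (\<lambda>(i, j). if i = (j + c' + c) mod n then f i * g ((j + c') mod n) else 0))"
    "j < dim_col (mat n n (\<lambda>(i, j). if i = (j + c' + c) mod n then f i * g ((j + c') mod n) else 0))"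
  then have i: "i < n" and j: "j < n" by auto
  define k where "k = (j + c') mod n"
  have k: "k < n" using j by (simp add: k_def)
  have "(monomial_mat n c f * monomial_mat n c' g) $$ (i, j) =
      (\<Sum>l<n. monomial_mat n c f $$ (i, l) * (if l = k then g l else 0))"
    using i j by (auto simp: index_mult_mat scalar_prod_def atLeast0LessThan monomial_mat_def k_def intro!: sum.cong)
  also have "\<dots> = (if i = (k + c) mod n then f i else 0) * g k"
    using i k by (simp add: sum_delta_mult_right monomial_mat_def)
  finally show "(monomial_mat n c f * monomial_mat n c' g) $$ (i, j) =
      mat n n (\<lambda>(i, j). if i = (j + c' + c) mod n then f i * g ((j + c') mod n) else 0) $$ (i, j)"
    using i j by (simp add: k_def mod_add_left_eq)
qed (auto simp: monomial_mat_def)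

definition cyclic_shift_mat :: "nat \<Rightarrow> 'a::zero_neq_one mat" where
  "cyclic_shift_mat n = mat n n (\<lambda>(i, j). if i = Suc j mod n then 1 else 0)"

lemma mat_diag_commute_cyclic_shift_imp_const:
  fixes t :: "nat \<Rightarrow> 'a::comm_ring_1"
  assumes comm: "mat_diag n t * cyclic_shift_mat n = cyclic_shift_mat n * mat_diag n t" and j: "j < n"
  shows "t j = t 0"
  using j
proof (induction j)
  case (Suc j)
  have P: "cyclic_shift_mat n \<in> carrier_mat n n" by (simp add: cyclic_shift_mat_def)
  have "cyclic_shift_mat n $$ (Suc j, j) = (1 :: 'a)"
    using Suc.prems by (simp add: cyclic_shift_mat_def)
  then have "t (Suc j) = t j"
    using arg_cong[OF comm, of "\<lambda>M. M $$ (Suc j, j)"] Suc.prems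
    by (simp add: mat_diag_mult_left[OF P] mat_diag_mult_right[OF P])
  then show ?case using Suc by simp
qed simp

definition swap_index :: "nat \<Rightarrow> nat \<Rightarrow> nat" where
  "swap_index n i = (i mod n) * n + i div n"

lemma swap_index:
  assumes i: "i < n * n"
  shows swap_index_less: "swap_index n i < n * n"
    and swap_index_div: "swap_index n i div n = i mod n"
    and swap_index_mod: "swap_index n i mod n = i div n"
    and swap_index_swap_index: "swap_index n (swap_index n i) = i"
proof -
  have n: "0 < n" and lt: "i div n < n" "i mod n < n"
    using i less_mult_imp_div_less mod_less_of_less_mult by (auto intro: gr0I)
  show div: "swap_index n i div n = i mod n" and mod: "swap_index n i mod n = i div n"
    using n lt by (simp_all add: swap_index_def)
  show "swap_index n i < n * n" using lt by (simp add: swap_index_def mult_add_less_mult)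
  show "swap_index n (swap_index n i) = i"
    using div mod by (simp add: swap_index_def[of n "swap_index n i"] add.commute mult.commute)
qed

definition swap_mat :: "nat \<Rightarrow> 'a::zero_neq_one mat" where
  "swap_mat n = mat (n * n) (n * n) (\<lambda>(i, j). if j = swap_index n i then 1 else 0)"

lemma swap_mat_carrier [simp]: "swap_mat n \<in> carrier_mat (n * n) (n * n)"
  by (simp add: swap_mat_def)

lemma swap_mat_kron:
  fixes A B :: "'a::comm_ring_1 mat"
  assumes A: "A \<in> carrier_mat n n" and B: "B \<in> carrier_mat n n"
  shows "swap_mat n * kron A B = kron B A * swap_mat n"
proof (rule eq_matI)
  fix i j assume "i < dim_row (kron B A * swap_mat n)" "j < dim_col (kron B A * swap_mat n)"
  then have i: "i < n * n" and j: "j < n * n" using A B by (auto simp: swap_mat_def)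
  have "(swap_mat n * kron A B) $$ (i, j) =
      (\<Sum>l<n * n. (if l = swap_index n i then 1 else 0) * kron A B $$ (l, j))"
    using A B i j by (auto simp: index_mult_mat scalar_prod_def atLeast0LessThan swap_mat_def intro!: sum.cong)
  also have "\<dots> = A $$ (i mod n, j div n) * B $$ (i div n, j mod n)"
    using A B i j swap_index[OF i] by (simp add: sum_delta_mult_left index_kron)
  finally have left: "(swap_mat n * kron A B) $$ (i, j) = A $$ (i mod n, j div n) * B $$ (i div n, j mod n)" .
  have "(kron B A * swap_mat n) $$ (i, j) =
      (\<Sum>l<n * n. kron B A $$ (i, l) * (if l = swap_index n j then 1 else 0))"
    using A B i j swap_index_swap_index[OF j]
    by (auto simp: index_mult_mat scalar_prod_def atLeast0LessThan swap_mat_def swap_index_swap_index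
        intro!: sum.cong)
  also have "\<dots> = B $$ (i div n, j mod n) * A $$ (i mod n, j div n)"
    using A B i j swap_index[OF j] by (simp add: sum_delta_mult_right index_kron)
  finally show "(swap_mat n * kron A B) $$ (i, j) = (kron B A * swap_mat n) $$ (i, j)"
    using left by (simp add: mult.commute)
qed (use A B in \<open>auto simp: swap_mat_def\<close>)

lemma swap_mat_not_scalar:
  assumes "2 \<le> n"
  shows "swap_mat n \<noteq> (c \<cdot>\<^sub>m 1\<^sub>m (n * n) :: 'a::comm_ring_1 mat)"
proof
  assume eq: "swap_mat n = (c \<cdot>\<^sub>m 1\<^sub>m (n * n) :: 'a mat)"
  have "n < 2 * n" "2 * n \<le> n * n" using assms by (simp, intro mult_right_mono) simp_all
  then have "n < n * n" by (rule less_le_trans)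
  then have lt: "0 < n * n" "1 < n * n" "n < n * n" using assms by linarith+
  have "swap_mat n $$ (0, 0) = (1 :: 'a)" using lt by (simp add: swap_mat_def swap_index_def)
  then have "c = 1" using eq lt by simp
  moreover have "1 mod n = 1" "1 div n = 0" using assms by auto
  then have "swap_mat n $$ (1, n) = (1 :: 'a)"
    unfolding swap_mat_def index_mat(1)[OF lt(2) lt(3)] swap_index_def by simp
  ultimately show False using eq lt assms by simp
qed

section \<open>The category of representations\<close>

definition hom_vanishes :: "'g set \<Rightarrow> ('g, 'k::field) rep \<Rightarrow> ('g, 'k) rep \<Rightarrow> bool" where
  "hom_vanishes G X Y \<longleftrightarrow> (\<forall>T\<in>rep_hom G X Y. T = 0\<^sub>m (fst Y) (fst X))"

definition end_scalar :: "'g set \<Rightarrow> ('g, 'k::field) rep \<Rightarrow> bool" where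
  "end_scalar G X \<longleftrightarrow> (\<forall>T\<in>rep_hom G X X. \<exists>c. T = c \<cdot>\<^sub>m 1\<^sub>m (fst X))"

fun rep_power :: "('g, 'k::field) rep \<Rightarrow> nat \<Rightarrow> ('g, 'k) rep" where
  "rep_power X 0 = rep_unit"
| "rep_power X (Suc n) = rep_tensor X (rep_power X n)"

lemma rep_objD:
  assumes "X \<in> rep_obj G m e"
  shows rep_obj_carrier: "g \<in> G \<Longrightarrow> snd X g \<in> carrier_mat (fst X) (fst X)"
    and rep_obj_mult: "g \<in> G \<Longrightarrow> h \<in> G \<Longrightarrow> snd X (m g h) = snd X g * snd X h"
    and rep_obj_one: "snd X e = 1\<^sub>m (fst X)"
  using assms by (auto simp: rep_obj_def)

lemma rep_homI:
  "T \<in> carrier_mat (fst Y) (fst X) \<Longrightarrow> (\<And>g. g \<in> G \<Longrightarrow> T * snd X g = snd Y g * T) \<Longrightarrow> T \<in> rep_hom G X Y"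
  by (auto simp: rep_hom_def)

lemma rep_homD:
  assumes "T \<in> rep_hom G X Y"
  shows rep_hom_carrier: "T \<in> carrier_mat (fst Y) (fst X)"
    and rep_hom_commute: "g \<in> G \<Longrightarrow> T * snd X g = snd Y g * T"
  using assms by (auto simp: rep_hom_def)

lemma rep_hom_comp:
  assumes X: "X \<in> rep_obj G m e" and Y: "Y \<in> rep_obj G m e" and Z: "Z \<in> rep_obj G m e"
    and T: "T \<in> rep_hom G X Y" and S: "S \<in> rep_hom G Y Z"
  shows "S * T \<in> rep_hom G X Z"
proof (rule rep_homI)
  show "S * T \<in> carrier_mat (fst Z) (fst X)" using rep_hom_carrier[OF T] rep_hom_carrier[OF S] by auto
  fix g assume g: "g \<in> G"
  note c = rep_obj_carrier[OF X g] rep_obj_carrier[OF Y g] rep_obj_carrier[OF Z g]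
    rep_hom_carrier[OF T] rep_hom_carrier[OF S]
  have "S * T * snd X g = S * (T * snd X g)" using c by (simp add: assoc_mult_mat[of _ "fst Z" "fst Y"])
  also have "\<dots> = S * (snd Y g * T)" using rep_hom_commute[OF T g] by simp
  also have "\<dots> = (S * snd Y g) * T" using c by (simp add: assoc_mult_mat[of _ "fst Z" "fst Y"])
  also have "\<dots> = (snd Z g * S) * T" using rep_hom_commute[OF S g] by simp
  also have "\<dots> = snd Z g * (S * T)" using c by (simp add: assoc_mult_mat[of _ "fst Z" "fst Z"])
  finally show "S * T * snd X g = snd Z g * (S * T)" .
qed

lemma rep_hom_one: "X \<in> rep_obj G m e \<Longrightarrow> 1\<^sub>m (fst X) \<in> rep_hom G X X"
  by (rule rep_homI) (auto dest: rep_obj_carrier)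

lemma rep_hom_smult:
  assumes X: "X \<in> rep_obj G m e" and Y: "Y \<in> rep_obj G m e" and T: "T \<in> rep_hom G X Y"
  shows "c \<cdot>\<^sub>m T \<in> rep_hom G X Y"
proof (rule rep_homI)
  show "c \<cdot>\<^sub>m T \<in> carrier_mat (fst Y) (fst X)" using rep_hom_carrier[OF T] by simp
  fix g assume g: "g \<in> G"
  have "c \<cdot>\<^sub>m T * snd X g = c \<cdot>\<^sub>m (snd Y g * T)"
    using mult_smult_assoc_mat[OF rep_hom_carrier[OF T] rep_obj_carrier[OF X g]] rep_hom_commute[OF T g] by simp
  also have "\<dots> = snd Y g * (c \<cdot>\<^sub>m T)"
    by (rule mult_smult_distrib[OF rep_obj_carrier[OF Y g] rep_hom_carrier[OF T], symmetric])
  finally show "c \<cdot>\<^sub>m T * snd X g = snd Y g * (c \<cdot>\<^sub>m T)" .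
qed

lemma rep_iso_refl: "X \<in> rep_obj G m e \<Longrightarrow> rep_iso G X X (1\<^sub>m (fst X))"
  unfolding rep_iso_def using rep_hom_one[of X G m e] by (auto intro!: bexI[of _ "1\<^sub>m (fst X)"])

lemma rep_iso_sym: "rep_iso G X Y T \<Longrightarrow> \<exists>S. rep_iso G Y X S"
  unfolding rep_iso_def by blast

lemma rep_iso_trans:
  assumes X: "X \<in> rep_obj G m e" and Y: "Y \<in> rep_obj G m e" and Z: "Z \<in> rep_obj G m e"
    and T: "rep_iso G X Y T" and S: "rep_iso G Y Z S"
  shows "rep_iso G X Z (S * T)"
proof -
  obtain T' where T': "T' \<in> rep_hom G Y X" "T' * T = 1\<^sub>m (fst X)" "T * T' = 1\<^sub>m (fst Y)"
    and Th: "T \<in> rep_hom G X Y"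
    using T unfolding rep_iso_def by blast
  obtain S' where S': "S' \<in> rep_hom G Z Y" "S' * S = 1\<^sub>m (fst Y)" "S * S' = 1\<^sub>m (fst Z)"
    and Sh: "S \<in> rep_hom G Y Z"
    using S unfolding rep_iso_def by blast
  have Tc: "T \<in> carrier_mat (fst Y) (fst X)" and Sc: "S \<in> carrier_mat (fst Z) (fst Y)"
    and T'c: "T' \<in> carrier_mat (fst X) (fst Y)" and S'c: "S' \<in> carrier_mat (fst Y) (fst Z)"
    using Th Sh T'(1) S'(1) by (auto dest: rep_hom_carrier)
  have "(T' * S') * (S * T) = T' * ((S' * S) * T)"
    using T'c S'c Sc Tc by (simp add: assoc_mult_mat[OF T'c S'c mult_carrier_mat[OF Sc Tc]])
  then have left: "(T' * S') * (S * T) = 1\<^sub>m (fst X)" using S'(2) T'(2) Tc by simp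
  have "(S * T) * (T' * S') = S * ((T * T') * S')"
    using T'c S'c Sc Tc by (simp add: assoc_mult_mat[OF Sc Tc mult_carrier_mat[OF T'c S'c]])
  then have right: "(S * T) * (T' * S') = 1\<^sub>m (fst Z)" using S'(3) T'(3) S'c Sc by simp
  show ?thesis unfolding rep_iso_def
    using rep_hom_comp[OF X Y Z Th Sh] rep_hom_comp[OF Z Y X S'(1) T'(1)] left right by blast
qed

lemma rep_hom_conj_iso:
  assumes A: "A \<in> rep_obj G m e" and A': "A' \<in> rep_obj G m e"
    and B: "B \<in> rep_obj G m e" and B': "B' \<in> rep_obj G m e"
    and T: "rep_iso G A A' T" and S: "rep_iso G B B' S" and U: "U \<in> rep_hom G A' B'"
  obtains T' V where "T' \<in> rep_hom G A' A" "T * T' = 1\<^sub>m (fst A')" "V \<in> rep_hom G A B" "U = S * V * T'"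
proof -
  obtain T' where T': "T' \<in> rep_hom G A' A" "T * T' = 1\<^sub>m (fst A')" and Th: "T \<in> rep_hom G A A'"
    using T unfolding rep_iso_def by blast
  obtain S' where S': "S' \<in> rep_hom G B' B" "S * S' = 1\<^sub>m (fst B')" and Sh: "S \<in> rep_hom G B B'"
    using S unfolding rep_iso_def by blast
  have Tc: "T \<in> carrier_mat (fst A') (fst A)" and Sc: "S \<in> carrier_mat (fst B') (fst B)"
    and T'c: "T' \<in> carrier_mat (fst A) (fst A')" and S'c: "S' \<in> carrier_mat (fst B) (fst B')"
    and Uc: "U \<in> carrier_mat (fst B') (fst A')"
    using Th Sh T'(1) S'(1) U by (auto dest: rep_hom_carrier)
  have V: "S' * U * T \<in> rep_hom G A B"
    by (rule rep_hom_comp[OF A A' B Th rep_hom_comp[OF A' B' B U S'(1)]])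
  have "S * (S' * U * T) * T' = (S * S') * (U * T) * T'"
    using Sc S'c Uc Tc by (simp add: assoc_mult_mat[OF S'c Uc Tc] assoc_mult_mat[OF Sc S'c mult_carrier_mat[OF Uc Tc]])
  also have "\<dots> = U * (T * T')"
    using S'(2) Uc Tc T'c by simp
  also have "\<dots> = U" using T'(2) Uc by simp
  finally show ?thesis using that[OF T'(1) T'(2) V] by simp
qed

lemma hom_vanishes_iso:
  assumes objs: "A \<in> rep_obj G m e" "A' \<in> rep_obj G m e" "B \<in> rep_obj G m e" "B' \<in> rep_obj G m e"
    and isos: "rep_iso G A A' T" "rep_iso G B B' S" and vanish: "hom_vanishes G A B"
  shows "hom_vanishes G A' B'"
  unfolding hom_vanishes_def
proof
  fix U assume U: "U \<in> rep_hom G A' B'"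
  then obtain T' V where T': "T' \<in> rep_hom G A' A" and "V \<in> rep_hom G A B" and U_eq: "U = S * V * T'"
    using rep_hom_conj_iso[OF objs isos U] by metis
  then have "V = 0\<^sub>m (fst B) (fst A)" using vanish unfolding hom_vanishes_def by blast
  moreover have "S \<in> carrier_mat (fst B') (fst B)"
    using isos(2) unfolding rep_iso_def by (auto dest: rep_hom_carrier)
  ultimately show "U = 0\<^sub>m (fst B') (fst A')"
    using U_eq rep_hom_carrier[OF T'] by simp
qed

lemma end_scalar_iso:
  assumes A: "A \<in> rep_obj G m e" and A': "A' \<in> rep_obj G m e"
    and T: "rep_iso G A A' T" and scalar: "end_scalar G A"
  shows "end_scalar G A'"
  unfolding end_scalar_def
proof
  fix U assume "U \<in> rep_hom G A' A'"
  then obtain T' V where T'h: "T' \<in> rep_hom G A' A" and T': "T * T' = 1\<^sub>m (fst A')"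
    and V: "V \<in> rep_hom G A A" and U: "U = T * V * T'"
    using rep_hom_conj_iso[OF A A' A A' T T] by metis
  obtain c where "V = c \<cdot>\<^sub>m 1\<^sub>m (fst A)" using V scalar unfolding end_scalar_def by blast
  moreover have Tc: "T \<in> carrier_mat (fst A') (fst A)" using T unfolding rep_iso_def by (auto dest: rep_hom_carrier)
  moreover have T'c: "T' \<in> carrier_mat (fst A) (fst A')" using rep_hom_carrier[OF T'h] .
  ultimately have "U = c \<cdot>\<^sub>m (T * T')"
    using U by (simp add: mult_smult_distrib[OF Tc one_carrier_mat] mult_smult_assoc_mat[OF Tc T'c])
  then show "\<exists>c. U = c \<cdot>\<^sub>m 1\<^sub>m (fst A')" using T' by auto
qed

lemma rep_tensor_obj:
  assumes X: "X \<in> rep_obj G m e" and Y: "Y \<in> rep_obj G m e"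
  shows "rep_tensor X Y \<in> rep_obj G m e"
  using rep_obj_carrier[OF X] rep_obj_carrier[OF Y] rep_obj_mult[OF X] rep_obj_mult[OF Y]
    rep_obj_one[OF X] rep_obj_one[OF Y]
  by (auto simp: rep_obj_def rep_tensor_def kron_one_mat
      kron_mult_kron[of _ "fst X" "fst X" _ "fst X" _ "fst Y" "fst Y" _ "fst Y"])

lemma rep_unit_obj: "rep_unit \<in> rep_obj G m e"
  unfolding rep_obj_def rep_unit_def by auto

lemma rep_power_obj: "X \<in> rep_obj G m e \<Longrightarrow> rep_power X n \<in> rep_obj G m e"
  by (induction n) (auto intro: rep_tensor_obj rep_unit_obj)

lemma fst_rep_power: "fst (rep_power X n) = fst X ^ n"
  by (induction n) (auto simp: rep_unit_def rep_tensor_def)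

lemma rep_tensor_hom:
  assumes X: "X \<in> rep_obj G m e" and Y: "Y \<in> rep_obj G m e"
    and X': "X' \<in> rep_obj G m e" and Y': "Y' \<in> rep_obj G m e"
    and T: "T \<in> rep_hom G X X'" and S: "S \<in> rep_hom G Y Y'"
  shows "kron T S \<in> rep_hom G (rep_tensor X Y) (rep_tensor X' Y')"
proof (rule rep_homI)
  show "kron T S \<in> carrier_mat (fst (rep_tensor X' Y')) (fst (rep_tensor X Y))"
    using rep_hom_carrier[OF T] rep_hom_carrier[OF S] by (simp add: rep_tensor_def)
  fix g assume g: "g \<in> G"
  show "kron T S * snd (rep_tensor X Y) g = snd (rep_tensor X' Y') g * kron T S"
    using rep_hom_carrier[OF T] rep_hom_carrier[OF S] rep_obj_carrier[OF X g] rep_obj_carrier[OF Y g]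
      rep_obj_carrier[OF X' g] rep_obj_carrier[OF Y' g] rep_hom_commute[OF T g] rep_hom_commute[OF S g]
    by (simp add: rep_tensor_def kron_mult_kron)
qed

lemma rep_tensor_iso:
  assumes X: "X \<in> rep_obj G m e" and Y: "Y \<in> rep_obj G m e"
    and X': "X' \<in> rep_obj G m e" and Y': "Y' \<in> rep_obj G m e"
    and T: "rep_iso G X X' T" and S: "rep_iso G Y Y' S"
  shows "rep_iso G (rep_tensor X Y) (rep_tensor X' Y') (kron T S)"
proof -
  obtain T' where T': "T' \<in> rep_hom G X' X" "T' * T = 1\<^sub>m (fst X)" "T * T' = 1\<^sub>m (fst X')"
    and Th: "T \<in> rep_hom G X X'"
    using T unfolding rep_iso_def by blast
  obtain S' where S': "S' \<in> rep_hom G Y' Y" "S' * S = 1\<^sub>m (fst Y)" "S * S' = 1\<^sub>m (fst Y')"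
    and Sh: "S \<in> rep_hom G Y Y'"
    using S unfolding rep_iso_def by blast
  show ?thesis unfolding rep_iso_def
    using rep_tensor_hom[OF X Y X' Y' Th Sh] rep_tensor_hom[OF X' Y' X Y T'(1) S'(1)] T' S'
      rep_hom_carrier[OF Th] rep_hom_carrier[OF Sh] rep_hom_carrier[OF T'(1)] rep_hom_carrier[OF S'(1)]
    by (intro conjI bexI[of _ "kron T' S'"]) (auto simp: kron_mult_kron kron_one_mat rep_tensor_def)
qed

lemma rep_hom_unit_iff:
  "T \<in> rep_hom G rep_unit Y \<longleftrightarrow> T \<in> carrier_mat (fst Y) 1 \<and> (\<forall>g\<in>G. snd Y g * T = T)"
  unfolding rep_hom_def rep_unit_def by (auto simp: carrier_matD)

lemma rep_power_trivial:
  "snd X g = 1\<^sub>m (fst X) \<Longrightarrow> snd (rep_power X n) g = (1\<^sub>m (fst (rep_power X n)) :: 'k::field mat)"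
  by (induction n) (auto simp: rep_unit_def rep_tensor_def kron_one_mat)

lemma end_scalar_if_dim_le_one:
  assumes "fst X \<le> 1"
  shows "end_scalar G X"
  unfolding end_scalar_def
proof
  fix T assume "T \<in> rep_hom G X X"
  then have T: "T \<in> carrier_mat (fst X) (fst X)" by (rule rep_hom_carrier)
  have "T = T $$ (0, 0) \<cdot>\<^sub>m 1\<^sub>m (fst X)"
  proof (rule eq_matI)
    fix i j assume "i < dim_row (T $$ (0, 0) \<cdot>\<^sub>m 1\<^sub>m (fst X))" "j < dim_col (T $$ (0, 0) \<cdot>\<^sub>m 1\<^sub>m (fst X))"
    then have "i = 0" "j = 0" "0 < fst X" using assms by simp_all
    then show "T $$ (i, j) = (T $$ (0, 0) \<cdot>\<^sub>m 1\<^sub>m (fst X)) $$ (i, j)" by simp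
  qed (use T in auto)
  then show "\<exists>c. T = c \<cdot>\<^sub>m 1\<^sub>m (fst X)" ..
qed

lemma dim_le_one_if_scalar_action:
  fixes X :: "('g, 'k::field) rep"
  assumes X: "X \<in> rep_obj G m e" and scalar_action: "\<And>g. g \<in> G \<Longrightarrow> \<exists>c. snd X g = c \<cdot>\<^sub>m 1\<^sub>m (fst X)"
    and scalar: "end_scalar G X"
  shows "fst X \<le> 1"
proof (rule ccontr)
  assume "\<not> fst X \<le> 1"
  define M :: "'k mat" where "M = mat (fst X) (fst X) (\<lambda>(i, j). if i = 0 \<and> j = 1 then 1 else 0)"
  have "M \<in> rep_hom G X X"
  proof (rule rep_homI)
    show M: "M \<in> carrier_mat (fst X) (fst X)" by (simp add: M_def)
    fix g assume "g \<in> G"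
    then obtain c where "snd X g = c \<cdot>\<^sub>m 1\<^sub>m (fst X)" using scalar_action by blast
    then show "M * snd X g = snd X g * M"
      using M by (simp add: mult_smult_distrib[OF M one_carrier_mat] mult_smult_assoc_mat[OF one_carrier_mat M])
  qed
  then obtain c where "M = c \<cdot>\<^sub>m 1\<^sub>m (fst X)" using scalar unfolding end_scalar_def by blast
  then have "M $$ (0, 1) = 0" using \<open>\<not> fst X \<le> 1\<close> by simp
  moreover have "M $$ (0, 1) = 1" using \<open>\<not> fst X \<le> 1\<close> by (simp add: M_def)
  ultimately show False by simp
qed

lemma not_end_scalar_tensor_square:
  fixes X :: "('g, 'k::field) rep"
  assumes X: "X \<in> rep_obj G m e" and dim: "2 \<le> fst X"
  shows "\<not> end_scalar G (rep_tensor X X)"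
proof
  assume scalar: "end_scalar G (rep_tensor X X)"
  have "(swap_mat (fst X) :: 'k mat) \<in> rep_hom G (rep_tensor X X) (rep_tensor X X)"
    using rep_obj_carrier[OF X] by (intro rep_homI) (auto simp: rep_tensor_def swap_mat_kron)
  then obtain c where "(swap_mat (fst X) :: 'k mat) = c \<cdot>\<^sub>m 1\<^sub>m (fst (rep_tensor X X))"
    using scalar unfolding end_scalar_def by blast
  then show False using swap_mat_not_scalar[OF dim, of c] by (simp add: rep_tensor_def)
qed

section \<open>Invariants of tensor equivalences\<close>

definition separated_triple ::
  "'g set \<Rightarrow> ('g \<Rightarrow> 'g \<Rightarrow> 'g) \<Rightarrow> 'g \<Rightarrow> (nat \<Rightarrow> ('g, 'k::field) rep) \<Rightarrow> bool" where
  "separated_triple G m e X \<longleftrightarrow>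
     (\<forall>i<3. X i \<in> rep_obj G m e \<and> end_scalar G (X i) \<and> \<not> end_scalar G (rep_tensor (X i) (X i))) \<and>
     (\<forall>i<3. \<forall>j<3. i \<noteq> j \<longrightarrow> (\<forall>n. hom_vanishes G rep_unit (rep_tensor (X i) (rep_power (X j) n))))"

locale tensor_equiv =
  fixes G1 :: "'g set" and m1 e1 and G2 :: "'h set" and m2 e2
    and F :: "('g, 'k::field) rep \<Rightarrow> ('h, 'k) rep" and Fm J \<phi>
  assumes tensor_equivalence: "tensor_equivalence G1 m1 e1 G2 m2 e2 F Fm J \<phi>"
begin

abbreviation "Ob1 \<equiv> rep_obj G1 m1 e1"

abbreviation "Ob2 \<equiv> rep_obj G2 m2 e2"

lemmas equivalence_conjuncts = tensor_equivalence[unfolded tensor_equivalence_def Let_def]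

lemma obj: "X \<in> Ob1 \<Longrightarrow> F X \<in> Ob2"
  using equivalence_conjuncts by (elim conjE) blast

lemma hom: "X \<in> Ob1 \<Longrightarrow> Y \<in> Ob1 \<Longrightarrow> T \<in> rep_hom G1 X Y \<Longrightarrow> Fm X Y T \<in> rep_hom G2 (F X) (F Y)"
  using equivalence_conjuncts by (elim conjE) blast

lemma map_one: "X \<in> Ob1 \<Longrightarrow> Fm X X (1\<^sub>m (fst X)) = 1\<^sub>m (fst (F X))"
  using equivalence_conjuncts by (elim conjE) blast

lemma map_smult: "X \<in> Ob1 \<Longrightarrow> Y \<in> Ob1 \<Longrightarrow> T \<in> rep_hom G1 X Y \<Longrightarrow> Fm X Y (c \<cdot>\<^sub>m T) = c \<cdot>\<^sub>m Fm X Y T"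
  using equivalence_conjuncts by (elim conjE) blast

lemma tensor_iso: "X \<in> Ob1 \<Longrightarrow> Y \<in> Ob1 \<Longrightarrow> rep_iso G2 (rep_tensor (F X) (F Y)) (F (rep_tensor X Y)) (J X Y)"
  using equivalence_conjuncts by (elim conjE) blast

lemma unit_iso: "rep_iso G2 rep_unit (F rep_unit) \<phi>"
  using equivalence_conjuncts by (elim conjE) blast

lemma bij: "X \<in> Ob1 \<Longrightarrow> Y \<in> Ob1 \<Longrightarrow> bij_betw (Fm X Y) (rep_hom G1 X Y) (rep_hom G2 (F X) (F Y))"
  using equivalence_conjuncts by (elim conjE) simp

lemma map_zero:
  assumes X: "X \<in> Ob1" and Y: "Y \<in> Ob1"
  shows "Fm X Y (0\<^sub>m (fst Y) (fst X)) = 0\<^sub>m (fst (F Y)) (fst (F X))"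
proof -
  have zero: "0\<^sub>m (fst Y) (fst X) \<in> rep_hom G1 X Y"
    using X Y by (intro rep_homI) (auto dest!: rep_obj_carrier)
  have "Fm X Y (0\<^sub>m (fst Y) (fst X)) = Fm X Y (0 \<cdot>\<^sub>m 0\<^sub>m (fst Y) (fst X))" by simp
  also have "\<dots> = 0 \<cdot>\<^sub>m Fm X Y (0\<^sub>m (fst Y) (fst X))" by (rule map_smult[OF X Y zero])
  also have "\<dots> = 0\<^sub>m (fst (F Y)) (fst (F X))"
    using rep_hom_carrier[OF hom[OF X Y zero]] by (intro eq_matI) auto
  finally show ?thesis .
qed

lemma map_scalar:
  "X \<in> Ob1 \<Longrightarrow> Fm X X (c \<cdot>\<^sub>m 1\<^sub>m (fst X)) = c \<cdot>\<^sub>m 1\<^sub>m (fst (F X))"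
  using map_smult[OF _ _ rep_hom_one] map_one by simp

lemma hom_vanishes_map:
  assumes X: "X \<in> Ob1" and Y: "Y \<in> Ob1" and vanish: "hom_vanishes G1 X Y"
  shows "hom_vanishes G2 (F X) (F Y)"
  unfolding hom_vanishes_def
proof
  fix U assume "U \<in> rep_hom G2 (F X) (F Y)"
  then obtain T where "T \<in> rep_hom G1 X Y" and U: "U = Fm X Y T"
    using bij[OF X Y] unfolding bij_betw_def by blast
  then have "T = 0\<^sub>m (fst Y) (fst X)" using vanish unfolding hom_vanishes_def by blast
  then show "U = 0\<^sub>m (fst (F Y)) (fst (F X))" using U map_zero[OF X Y] by simp
qed

lemma end_scalar_map_iff:
  assumes X: "X \<in> Ob1"
  shows "end_scalar G2 (F X) \<longleftrightarrow> end_scalar G1 X"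
proof
  assume scalar: "end_scalar G2 (F X)"
  show "end_scalar G1 X"
    unfolding end_scalar_def
  proof
    fix T assume T: "T \<in> rep_hom G1 X X"
    obtain c where c: "Fm X X T = c \<cdot>\<^sub>m 1\<^sub>m (fst (F X))"
      using scalar hom[OF X X T] unfolding end_scalar_def by blast
    have "c \<cdot>\<^sub>m 1\<^sub>m (fst X) \<in> rep_hom G1 X X" by (rule rep_hom_smult[OF X X rep_hom_one[OF X]])
    then have "T = c \<cdot>\<^sub>m 1\<^sub>m (fst X)"
      using bij[OF X X] T c map_scalar[OF X] unfolding bij_betw_def inj_on_def by metis
    then show "\<exists>c. T = c \<cdot>\<^sub>m 1\<^sub>m (fst X)" ..
  qed
next
  assume scalar: "end_scalar G1 X"
  show "end_scalar G2 (F X)"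
    unfolding end_scalar_def
  proof
    fix U assume "U \<in> rep_hom G2 (F X) (F X)"
    then obtain T where "T \<in> rep_hom G1 X X" and U: "U = Fm X X T"
      using bij[OF X X] unfolding bij_betw_def by blast
    then obtain c where "T = c \<cdot>\<^sub>m 1\<^sub>m (fst X)" using scalar unfolding end_scalar_def by blast
    then show "\<exists>c. U = c \<cdot>\<^sub>m 1\<^sub>m (fst (F X))" using U map_scalar[OF X] by auto
  qed
qed

lemma rep_power_iso:
  assumes X: "X \<in> Ob1"
  shows "\<exists>T. rep_iso G2 (rep_power (F X) n) (F (rep_power X n)) T"
proof (induction n)
  case 0
  then show ?case using unit_iso by auto
next
  case (Suc n)
  then obtain T where T: "rep_iso G2 (rep_power (F X) n) (F (rep_power X n)) T" by blast
  have FX: "F X \<in> Ob2" by (rule obj[OF X])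
  have P: "rep_power X n \<in> Ob1" by (rule rep_power_obj[OF X])
  have "rep_iso G2 (rep_tensor (F X) (rep_power (F X) n)) (rep_tensor (F X) (F (rep_power X n)))
      (kron (1\<^sub>m (fst (F X))) T)"
    by (rule rep_tensor_iso[OF FX rep_power_obj[OF FX] FX obj[OF P] rep_iso_refl[OF FX] T])
  from rep_iso_trans[OF rep_tensor_obj[OF FX rep_power_obj[OF FX]] rep_tensor_obj[OF FX obj[OF P]]
      obj[OF rep_tensor_obj[OF X P]] this tensor_iso[OF X P]]
  show ?case by auto
qed

lemma tensor_power_iso:
  assumes X: "X \<in> Ob1" and Y: "Y \<in> Ob1"
  shows "\<exists>T. rep_iso G2 (F (rep_tensor X (rep_power Y n))) (rep_tensor (F X) (rep_power (F Y) n)) T"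
proof -
  have P: "rep_power Y n \<in> Ob1" by (rule rep_power_obj[OF Y])
  have FX: "F X \<in> Ob2" and FY: "F Y \<in> Ob2" by (rule obj[OF X], rule obj[OF Y])
  obtain T where T: "rep_iso G2 (rep_power (F Y) n) (F (rep_power Y n)) T" using rep_power_iso[OF Y] by blast
  have "rep_iso G2 (rep_tensor (F X) (rep_power (F Y) n)) (rep_tensor (F X) (F (rep_power Y n)))
      (kron (1\<^sub>m (fst (F X))) T)"
    by (rule rep_tensor_iso[OF FX rep_power_obj[OF FY] FX obj[OF P] rep_iso_refl[OF FX] T])
  from rep_iso_trans[OF rep_tensor_obj[OF FX rep_power_obj[OF FY]] rep_tensor_obj[OF FX obj[OF P]]
      obj[OF rep_tensor_obj[OF X P]] this tensor_iso[OF X P]]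
  show ?thesis using rep_iso_sym by blast
qed

lemma separated_triple_map:
  assumes sep: "separated_triple G1 m1 e1 X"
  shows "separated_triple G2 m2 e2 (\<lambda>i. F (X i))"
  unfolding separated_triple_def
proof (intro conjI allI impI)
  fix i :: nat assume i: "i < 3"
  have Xi: "X i \<in> Ob1" using sep i unfolding separated_triple_def by blast
  show "F (X i) \<in> Ob2" by (rule obj[OF Xi])
  show "end_scalar G2 (F (X i))"
    using sep i end_scalar_map_iff[OF Xi] unfolding separated_triple_def by blast
  have "\<not> end_scalar G2 (F (rep_tensor (X i) (X i)))"
    using sep i end_scalar_map_iff[OF rep_tensor_obj[OF Xi Xi]] unfolding separated_triple_def by blast
  then show "\<not> end_scalar G2 (rep_tensor (F (X i)) (F (X i)))"
    using end_scalar_iso[OF rep_tensor_obj[OF obj[OF Xi] obj[OF Xi]] obj[OF rep_tensor_obj[OF Xi Xi]]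
        tensor_iso[OF Xi Xi]] by blast
next
  fix i j n :: nat assume i: "i < 3" and j: "j < 3" and ij: "i \<noteq> j"
  have Xi: "X i \<in> Ob1" and Xj: "X j \<in> Ob1" using sep i j unfolding separated_triple_def by blast+
  have XP: "rep_tensor (X i) (rep_power (X j) n) \<in> Ob1" by (rule rep_tensor_obj[OF Xi rep_power_obj[OF Xj]])
  have "hom_vanishes G2 (F rep_unit) (F (rep_tensor (X i) (rep_power (X j) n)))"
    using sep i j ij hom_vanishes_map[OF rep_unit_obj XP] unfolding separated_triple_def by blast
  moreover obtain S where "rep_iso G2 (F rep_unit) rep_unit S" using rep_iso_sym[OF unit_iso] by blast
  moreover obtain T where "rep_iso G2 (F (rep_tensor (X i) (rep_power (X j) n)))
      (rep_tensor (F (X i)) (rep_power (F (X j)) n)) T"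
    using tensor_power_iso[OF Xi Xj] by blast
  ultimately show "hom_vanishes G2 rep_unit (rep_tensor (F (X i)) (rep_power (F (X j)) n))"
    using hom_vanishes_iso[OF obj[OF rep_unit_obj] rep_unit_obj obj[OF XP]
        rep_tensor_obj[OF obj[OF Xi] rep_power_obj[OF obj[OF Xj]]]] by blast
qed

end

section \<open>Roots of unity of prime order\<close>

lemma power_eq_one_iff_prime_dvd:
  fixes x :: "'a::monoid_mult"
  assumes p: "prime p" and xp: "x ^ p = 1" and x1: "x \<noteq> 1"
  shows "x ^ k = 1 \<longleftrightarrow> p dvd k"
proof
  assume xk: "x ^ k = 1"
  show "p dvd k"
  proof (rule ccontr)
    assume "\<not> p dvd k"
    then have "coprime k p" "k \<noteq> 0" using p prime_imp_coprime[of p k] by (auto simp: coprime_commute intro: gr0I)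
    then obtain a b where "k * a = p * b + 1" using bezout_nat[of k p] by auto
    then have "x = x ^ (k * a)" using xp by (simp add: power_add power_mult)
    also have "\<dots> = 1" using xk by (simp add: power_mult)
    finally show False using x1 by simp
  qed
qed (use xp in \<open>auto simp: power_mult\<close>)

lemma exists_primitive_root_of_unity:
  assumes p: "prime p"
  shows "\<exists>z::'k::alg_closed_field_char_0. \<forall>k. z ^ k = 1 \<longleftrightarrow> p dvd k"
proof -
  have p1: "p > 1" using prime_gt_1_nat[OF p] .
  have "\<exists>x::'k. x ^ (p - 1) + (\<Sum>i<p - 1. 1 * x ^ i) = 0"
    by (rule alg_closed) (use p1 in simp)
  then obtain x :: 'k where "x ^ (p - 1) + (\<Sum>i<p - 1. x ^ i) = 0" by auto
  moreover have "(\<Sum>i<p. x ^ i) = (\<Sum>i<p - 1. x ^ i) + x ^ (p - 1)"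
    using p1 by (cases p) auto
  ultimately have sum0: "(\<Sum>i<p. x ^ i) = 0" by (simp add: add.commute)
  have x1: "x \<noteq> 1"
  proof
    assume "x = 1"
    then have "(of_nat p :: 'k) = 0" using sum0 by simp
    then show False using p1 by simp
  qed
  then have "x ^ p = 1" using sum0 sum_gp_strict[of x p] by simp
  then show ?thesis using power_eq_one_iff_prime_dvd[OF p _ x1] by blast
qed

lemma sum_powers_root_of_unity:
  fixes w :: "'k::field"
  assumes "w ^ p = 1"
  shows "(\<Sum>x<p. w ^ x) = (if w = 1 then of_nat p else 0)"
  using assms sum_gp_strict[of w p] by simp

locale primitive_root =
  fixes p :: nat and z :: "'k::field_char_0"
  assumes p_pos: "0 < p" and z_pow_eq_one_iff: "z ^ k = 1 \<longleftrightarrow> p dvd k"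
begin

lemma z_nonzero: "z \<noteq> 0"
  using z_pow_eq_one_iff[of p] p_pos by (metis dvd_refl power_0_left zero_neq_one neq0_conv)

lemma z_pow_eq_iff: "z ^ m = z ^ n \<longleftrightarrow> [m = n] (mod p)"
proof -
  have shift: "z ^ (k + d) = z ^ k \<longleftrightarrow> [k + d = k] (mod p)" for k d
    using z_nonzero z_pow_eq_one_iff[of d] by (simp add: power_add cong_add_lcancel_0_nat cong_0_iff)
  show ?thesis
  proof (cases "m \<le> n")
    case True
    then obtain d where "n = m + d" using le_Suc_ex by blast
    then show ?thesis using shift[of m d] by (metis cong_sym_eq)
  next
    case False
    then obtain d where "m = n + d" by (metis le_Suc_ex nle_le)
    then show ?thesis using shift[of n d] by simp
  qed
qed

lemma sum_character:
  "(\<Sum>x<p. \<Sum>a<p. inverse (z ^ (\<alpha> * x + \<beta> * a)) * z ^ (\<gamma> * x + \<delta> * a)) =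
     (if [\<gamma> = \<alpha>] (mod p) \<and> [\<delta> = \<beta>] (mod p) then of_nat (p * p) else 0)"
proof -
  have geom: "(\<Sum>x<p. (z ^ \<gamma> * inverse (z ^ \<alpha>)) ^ x) = (if [\<gamma> = \<alpha>] (mod p) then of_nat p else 0)" for \<alpha> \<gamma>
  proof -
    have "(z ^ \<gamma> * inverse (z ^ \<alpha>)) ^ p = (z ^ p) ^ \<gamma> * inverse ((z ^ p) ^ \<alpha>)"
      by (simp add: power_mult_distrib power_inverse power_mult[symmetric] mult.commute)
    moreover have "z ^ p = 1" using z_pow_eq_one_iff by simp
    ultimately have root: "(z ^ \<gamma> * inverse (z ^ \<alpha>)) ^ p = 1" by simp
    have "z ^ \<gamma> * inverse (z ^ \<alpha>) = 1 \<longleftrightarrow> [\<gamma> = \<alpha>] (mod p)"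
      using z_nonzero z_pow_eq_iff by (auto simp: field_simps)
    then show ?thesis by (simp only: sum_powers_root_of_unity[OF root])
  qed
  have "inverse (z ^ (\<alpha> * x + \<beta> * a)) * z ^ (\<gamma> * x + \<delta> * a) =
      (z ^ \<gamma> * inverse (z ^ \<alpha>)) ^ x * (z ^ \<delta> * inverse (z ^ \<beta>)) ^ a" for x a
    by (simp add: power_add power_mult_distrib power_inverse power_mult[symmetric] mult_ac)
  then have "(\<Sum>x<p. \<Sum>a<p. inverse (z ^ (\<alpha> * x + \<beta> * a)) * z ^ (\<gamma> * x + \<delta> * a)) =
      (\<Sum>x<p. (z ^ \<gamma> * inverse (z ^ \<alpha>)) ^ x) * (\<Sum>a<p. (z ^ \<delta> * inverse (z ^ \<beta>)) ^ a)"
    by (simp add: sum_product)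
  then show ?thesis by (simp add: geom)
qed

end

section \<open>Arithmetic modulo \<open>p\<close> of an element of order \<open>q\<close>\<close>

lemma exists_nat_dvd_add_mult:
  fixes a c :: int
  assumes p: "prime p" and a: "\<not> int p dvd a"
  shows "\<exists>m::nat. int p dvd (c + int m * a)"
proof -
  have "prime (int p)" using p by simp
  then have "coprime a (int p)" using a prime_imp_coprime[of "int p" a] by (simp add: coprime_commute)
  then obtain u where u: "[a * u = 1] (mod int p)" using cong_solve_coprime_int by blast
  define m where "m = (- c * u) mod int p"
  have "m \<ge> 0" using prime_gt_0_nat[OF p] by (simp add: m_def)
  have "[c + m * a = c + (- c * u) * a] (mod int p)"
    unfolding m_def by (intro cong_add cong_mult cong_refl) (simp add: cong_def)
  also have "(- c * u) * a = - c * (a * u)" by (simp add: mult_ac)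
  also have "[c + - c * (a * u) = c + - c * 1] (mod int p)"
    by (intro cong_add cong_mult cong_refl u)
  finally have "int p dvd (c + m * a)" by (simp add: cong_0_iff)
  then show ?thesis using \<open>m \<ge> 0\<close> by (metis nonneg_int_cases of_nat_eq_iff)
qed

locale pq_setting =
  fixes p q r :: nat
  assumes prime_p: "prime p" and prime_q: "prime q" and odd_q: "odd q"
    and r_not_one: "r mod p \<noteq> 1" and r_pow_q: "r ^ q mod p = 1"
begin

definition s :: nat where "s = r ^ (q - 1)"

lemma p_gt_1: "1 < p" and q_gt_2: "2 < q"
  using prime_gt_1_nat[OF prime_p] prime_ge_2_nat[OF prime_q] odd_q by (auto simp: le_less)

lemma coprime_p_r: "coprime p r"
proof -
  have "\<not> p dvd r"
  proof
    assume "p dvd r"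
    then have "p dvd r ^ q" using prime_gt_0_nat[OF prime_q] by (metis dvd_power dvd_trans)
    then show False using r_pow_q p_gt_1 by simp
  qed
  then show ?thesis using prime_p by (simp add: prime_imp_coprime)
qed

lemma ord_r: "ord p r = q"
proof -
  have "ord p r dvd q" using r_pow_q p_gt_1 by (simp add: ord_divides[symmetric] cong_def)
  moreover have "ord p r \<noteq> 1" using r_not_one p_gt_1 by (simp add: ord_eq_Suc_0_iff cong_def)
  ultimately show ?thesis using prime_q by (auto simp: prime_nat_iff)
qed

lemma r_pow_cong_iff: "[r ^ m = r ^ n] (mod p) \<longleftrightarrow> [m = n] (mod q)"
  using order_divides_expdiff[OF coprime_p_r] ord_r by simp

lemma r_pow_cong_one_iff: "[r ^ m = 1] (mod p) \<longleftrightarrow> q dvd m"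
  using r_pow_cong_iff[of m 0] by (simp add: cong_0_iff)

lemma s_pow_cong_one_iff: "[s ^ m = 1] (mod p) \<longleftrightarrow> q dvd m"
proof -
  have "coprime q (q - 1)" using q_gt_2 by (intro coprime_diff_one_right_nat) simp
  then have "q dvd (q - 1) * m \<longleftrightarrow> q dvd m" by (rule coprime_dvd_mult_right_iff)
  moreover have "[s ^ m = 1] (mod p) \<longleftrightarrow> q dvd (q - 1) * m"
    unfolding s_def power_mult[symmetric] by (rule r_pow_cong_one_iff)
  ultimately show ?thesis by simp
qed

lemma r_mult_s: "[r * s = 1] (mod p)"
proof -
  have "r * s = r ^ q" unfolding s_def using q_gt_2 by (simp add: power_Suc[symmetric])
  then show ?thesis using r_pow_q p_gt_1 by (simp add: cong_def)
qed

lemma r_pow_mult_s_pow: "[r ^ c * s ^ c = 1] (mod p)"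
  using cong_pow[OF r_mult_s, of c] by (simp add: power_mult_distrib)

lemma r_not_cong_s: "\<not> [r = s] (mod p)"
proof
  assume "[r = s] (mod p)"
  then have "[r ^ 2 = 1] (mod p)" using cong_trans[OF cong_mult[OF cong_refl] r_mult_s] by (simp add: power2_eq_square)
  then show False using q_gt_2 r_pow_cong_one_iff by (auto dest: dvd_imp_le)
qed

lemma twisted_weight_not_fixed:
  assumes "\<not> (p dvd \<alpha> \<and> p dvd \<beta>)" and "0 < c" "c < q"
  shows "\<not> ([\<alpha> * r ^ c = \<alpha>] (mod p) \<and> [\<beta> * s ^ c = \<beta>] (mod p))"
proof
  have no_q: "\<not> q dvd c" using assms(2,3) by (auto dest: dvd_imp_le)
  assume fixed: "[\<alpha> * r ^ c = \<alpha>] (mod p) \<and> [\<beta> * s ^ c = \<beta>] (mod p)"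
  show False
  proof (cases "p dvd \<alpha>")
    case False
    then have "coprime \<alpha> p" using prime_imp_coprime[OF prime_p False] by (simp add: coprime_commute)
    then have "[r ^ c = 1] (mod p)" using fixed cong_mult_lcancel_nat[of \<alpha> p "r ^ c" 1] by simp
    then show False using no_q r_pow_cong_one_iff by simp
  next
    case True
    then have "\<not> p dvd \<beta>" using assms(1) by blast
    then have "coprime \<beta> p" using prime_imp_coprime[OF prime_p] by (simp add: coprime_commute)
    then have "[s ^ c = 1] (mod p)" using fixed cong_mult_lcancel_nat[of \<beta> p "s ^ c" 1] by simp
    then show False using no_q s_pow_cong_one_iff by simp
  qed
qed

text \<open>In \<open>Rep(G')\<close>, the element \<open>(0, 0, 1)\<close> maps weight vectors of weight \<open>(c, d)\<close> to weight
  vectors of the twisted weight \<open>(r c, s d)\<close>; \<open>cancellable\<close> says that \<open>(a, b)\<close> plus \<open>k\<^sub>0\<close> copies of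
  \<open>(c, d)\<close> and \<open>k\<^sub>1\<close> copies of its twist vanishes modulo \<open>p\<close>.\<close>

definition cancellable :: "nat \<times> nat \<Rightarrow> nat \<times> nat \<Rightarrow> bool" where
  "cancellable w w' \<longleftrightarrow> (case (w, w') of ((a, b), (c, d)) \<Rightarrow>
     \<exists>k0 k1. p dvd a + k0 * c + k1 * r * c \<and> p dvd b + k0 * d + k1 * s * d)"

lemma cancellable_if_coords_nonzero:
  assumes c: "\<not> p dvd c" and d: "\<not> p dvd d"
  shows "cancellable (a, b) (c, d)"
proof -
  have "\<not> int p dvd (int r - int s)"
    using r_not_cong_s by (simp add: cong_iff_dvd_diff[symmetric] cong_int_iff)
  then have "\<not> int p dvd ((int r - int s) * int c * int d)"
    using c d prime_p by (simp add: prime_dvd_mult_iff)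
  \<comment> \<open>eliminate \<open>k\<^sub>0\<close>; the remaining coefficient \<open>(r - s) c d\<close> of \<open>k\<^sub>1\<close> is a unit modulo \<open>p\<close>\<close>
  then obtain k1 where k1: "int p dvd (int d * int a - int c * int b) + int k1 * ((int r - int s) * int c * int d)"
    using exists_nat_dvd_add_mult[OF prime_p] by blast
  have "\<not> int p dvd int c" using c by simp
  then obtain k0 where k0: "int p dvd (int a + int k1 * int r * int c) + int k0 * int c"
    using exists_nat_dvd_add_mult[OF prime_p] by blast
  define X where "X = int a + int k0 * int c + int k1 * int r * int c"
  define Y where "Y = int b + int k0 * int d + int k1 * int s * int d"
  have X: "int p dvd X" using k0 unfolding X_def by (simp add: algebra_simps)
  have "int c * Y = int d * X - ((int d * int a - int c * int b) + int k1 * ((int r - int s) * int c * int d))"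
    unfolding X_def Y_def by (simp add: algebra_simps)
  then have "int p dvd int c * Y" using X k1 by (simp add: dvd_diff)
  then have Y: "int p dvd Y" using c prime_p by (simp add: prime_dvd_mult_iff)
  have "p dvd a + k0 * c + k1 * r * c" "p dvd b + k0 * d + k1 * s * d"
    using X Y unfolding X_def Y_def by (simp_all flip: of_nat_mult of_nat_add)
  then show ?thesis unfolding cancellable_def by auto
qed

lemma cancellable_on_axis:
  assumes d: "\<not> p dvd d" and a: "p dvd a" and c: "p dvd c"
  shows "cancellable (a, b) (c, d)" and "cancellable (b, a) (d, c)"
proof -
  obtain k0 where "int p dvd int b + int k0 * int d"
    using exists_nat_dvd_add_mult[OF prime_p, of "int d" "int b"] d by auto
  then have "p dvd b + k0 * d" by (simp flip: of_nat_mult of_nat_add)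
  moreover have "p dvd a + k0 * c" using a c by simp
  ultimately have "p dvd a + k0 * c + 0 * r * c \<and> p dvd b + k0 * d + 0 * s * d"
    "p dvd b + k0 * d + 0 * r * d \<and> p dvd a + k0 * c + 0 * s * c"
    by simp_all
  then show "cancellable (a, b) (c, d)" "cancellable (b, a) (d, c)"
    unfolding cancellable_def by blast+
qed

lemma exists_cancellable_pair:
  fixes w :: "nat \<Rightarrow> nat \<times> nat"
  assumes nonzero: "\<And>i. i < 3 \<Longrightarrow> \<not> (p dvd fst (w i) \<and> p dvd snd (w i))"
  shows "\<exists>i<3. \<exists>j<3. i \<noteq> j \<and> cancellable (w i) (w j)"
proof (cases "\<exists>j<3. \<not> p dvd fst (w j) \<and> \<not> p dvd snd (w j)")
  case True
  then obtain j where j: "j < 3" "\<not> p dvd fst (w j)" "\<not> p dvd snd (w j)" by blast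
  define i where "i = (if j = 0 then 1 else 0 :: nat)"
  have "i < 3" "i \<noteq> j" unfolding i_def by auto
  moreover have "cancellable (w i) (w j)"
    using cancellable_if_coords_nonzero[OF j(2,3), of "fst (w i)" "snd (w i)"] by simp
  ultimately show ?thesis using j(1) by blast
next
  case False
  have pair: "cancellable (w i) (w j)"
    if "i < 3" "j < 3" and same_axis: "p dvd fst (w i) \<longleftrightarrow> p dvd fst (w j)" for i j
  proof -
    obtain a b c d where w: "w i = (a, b)" "w j = (c, d)" by (cases "w i", cases "w j")
    then have "p dvd a \<and> \<not> p dvd b \<or> p dvd b \<and> \<not> p dvd a" "p dvd c \<and> \<not> p dvd d \<or> p dvd d \<and> \<not> p dvd c"
      using False nonzero \<open>i < 3\<close> \<open>j < 3\<close> by (metis fst_conv snd_conv)+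
    moreover have "p dvd a \<longleftrightarrow> p dvd c" using same_axis w by simp
    ultimately show ?thesis
      using cancellable_on_axis(1)[of d a c b] cancellable_on_axis(2)[of c b d a] w by auto
  qed
  \<comment> \<open>pigeonhole: two of the three weights lie on the same axis\<close>
  have "(P0 \<longleftrightarrow> P1) \<or> (P0 \<longleftrightarrow> P2) \<or> (P1 \<longleftrightarrow> P2)" for P0 P1 P2 by blast
  then consider "p dvd fst (w 0) \<longleftrightarrow> p dvd fst (w 1)" | "p dvd fst (w 0) \<longleftrightarrow> p dvd fst (w 2)"
    | "p dvd fst (w 1) \<longleftrightarrow> p dvd fst (w 2)" by blast
  moreover have witness: "cancellable (w i) (w j) \<Longrightarrow> i < 3 \<Longrightarrow> j < 3 \<Longrightarrow> i \<noteq> j \<Longrightarrow> ?thesis" for i j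
    by blast
  ultimately show ?thesis
  proof cases
    case 1 then show ?thesis by (intro witness[OF pair[of 0 1]]) simp_all
  next
    case 2 then show ?thesis by (intro witness[OF pair[of 0 2]]) simp_all
  next
    case 3 then show ?thesis by (intro witness[OF pair[of 1 2]]) simp_all
  qed
qed

end

section \<open>A separated triple in \<open>Rep(G)\<close>\<close>

locale pq_rep = pq_setting p q r + primitive_root p z
  for p q r :: nat and z :: "'k::field_char_0"
begin

abbreviation "G \<equiv> sd_carrier p q"

abbreviation "mult_G \<equiv> sd_mult p q r r"

abbreviation "mult_G' \<equiv> sd_mult p q r s"

lemma sd_carrier_iff [simp]: "(x, a, c) \<in> G \<longleftrightarrow> x < p \<and> a < p \<and> c < q"
  by (simp add: sd_carrier_def)

lemma q_pos: "0 < q"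
  using q_gt_2 by simp

definition r_inv_pow :: "nat \<Rightarrow> nat" where
  "r_inv_pow i = r ^ ((q - 1) * i)"

lemma r_pow_mult_r_inv_pow:
  assumes "i = (k + c) mod q"
  shows "[r ^ c * r_inv_pow i = r_inv_pow k] (mod p)"
proof -
  have "[i = k + c] (mod q)" using assms by (simp add: cong_def)
  then have "[c + (q - 1) * i = c + (q - 1) * (k + c)] (mod q)"
    by (rule cong_add[OF cong_refl cong_mult[OF cong_refl]])
  also have "c + (q - 1) * (k + c) = (q - 1) * k + q * c"
    using q_pos by (cases q) (simp_all add: algebra_simps)
  also have "[(q - 1) * k + q * c = (q - 1) * k] (mod q)" by (simp add: cong_def)
  finally show ?thesis unfolding r_inv_pow_def power_add[symmetric] by (simp add: r_pow_cong_iff)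
qed

lemma r_inv_pow_inj:
  assumes "i < q" "k < q" "[r_inv_pow i = r_inv_pow k] (mod p)"
  shows "i = k"
proof -
  have "coprime (q - 1) q" using q_pos by (intro coprime_diff_one_left_nat) simp
  moreover have "[(q - 1) * i = (q - 1) * k] (mod q)"
    using assms(3) unfolding r_inv_pow_def by (simp add: r_pow_cong_iff)
  ultimately have "[i = k] (mod q)" by (simp add: cong_mult_lcancel_nat)
  then show ?thesis using assms(1,2) by (simp add: cong_less_imp_eq_nat)
qed

lemma not_dvd_r_inv_pow: "\<not> p dvd r_inv_pow i"
proof
  assume "p dvd r_inv_pow i"
  moreover have "coprime p (r_inv_pow i)" using coprime_p_r by (simp add: r_inv_pow_def)
  ultimately have "is_unit p" by (intro coprime_common_divisor[of p "r_inv_pow i"]) simp_all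
  then show False using p_gt_1 by simp
qed

text \<open>The representation of \<open>G\<close> induced from the character \<open>(x, a) \<mapsto> z\<^bsup>\<alpha> x + \<beta> a\<^esup>\<close> of
  the normal subgroup \<open>{(x, a, 0)}\<close>: the basis vector \<open>e\<^sub>j\<close> is sent to a multiple of \<open>e\<^bsub>j + c\<^esub>\<close>.\<close>

definition induced_mat :: "nat \<times> nat \<Rightarrow> nat \<times> nat \<times> nat \<Rightarrow> 'k mat" where
  "induced_mat w g = (case (w, g) of ((\<alpha>, \<beta>), (x, a, c)) \<Rightarrow>
     monomial_mat q c (\<lambda>i. z ^ ((\<alpha> * x + \<beta> * a) * r_inv_pow i)))"

definition induced_rep :: "nat \<times> nat \<Rightarrow> (nat \<times> nat \<times> nat, 'k) rep" where
  "induced_rep w = (q, induced_mat w)"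

lemma induced_mat_apply:
  "induced_mat (\<alpha>, \<beta>) (x, a, c) = monomial_mat q c (\<lambda>i. z ^ ((\<alpha> * x + \<beta> * a) * r_inv_pow i))"
  by (simp add: induced_mat_def)

lemma induced_mat_carrier: "induced_mat w g \<in> carrier_mat q q"
  by (simp add: induced_mat_def split: prod.split)

lemma induced_exponent_mult:
  assumes "i = (k + c) mod q"
  shows "z ^ ((\<alpha> * ((x + r ^ c * x') mod p) + \<beta> * ((a + r ^ c * a') mod p)) * r_inv_pow i) =
    z ^ ((\<alpha> * x + \<beta> * a) * r_inv_pow i) * z ^ ((\<alpha> * x' + \<beta> * a') * r_inv_pow k)"
proof -
  define lg lh where "lg = \<alpha> * x + \<beta> * a" and "lh = \<alpha> * x' + \<beta> * a'"
  have "[\<alpha> * ((x + r ^ c * x') mod p) + \<beta> * ((a + r ^ c * a') mod p) = \<alpha> * (x + r ^ c * x') + \<beta> * (a + r ^ c * a')] (mod p)"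
    by (intro cong_add cong_mult cong_refl) (simp_all add: cong_def)
  also have "\<alpha> * (x + r ^ c * x') + \<beta> * (a + r ^ c * a') = lg + r ^ c * lh"
    unfolding lg_def lh_def by (simp add: algebra_simps)
  finally have "[(\<alpha> * ((x + r ^ c * x') mod p) + \<beta> * ((a + r ^ c * a') mod p)) * r_inv_pow i =
      (lg + r ^ c * lh) * r_inv_pow i] (mod p)"
    by (rule cong_mult[OF _ cong_refl])
  also have "(lg + r ^ c * lh) * r_inv_pow i = lg * r_inv_pow i + lh * (r ^ c * r_inv_pow i)"
    by (simp add: algebra_simps)
  also have "[lg * r_inv_pow i + lh * (r ^ c * r_inv_pow i) = lg * r_inv_pow i + lh * r_inv_pow k] (mod p)"
    by (rule cong_add[OF cong_refl cong_mult[OF cong_refl r_pow_mult_r_inv_pow[OF assms]]])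
  finally show ?thesis unfolding lg_def lh_def by (simp add: z_pow_eq_iff power_add[symmetric])
qed

lemma induced_mat_mult:
  assumes "c < q" "c' < q"
  shows "induced_mat (\<alpha>, \<beta>) (mult_G (x, a, c) (x', a', c')) = induced_mat (\<alpha>, \<beta>) (x, a, c) * induced_mat (\<alpha>, \<beta>) (x', a', c')"
proof -
  define lg lh where "lg = \<alpha> * x + \<beta> * a" and "lh = \<alpha> * x' + \<beta> * a'"
  define lgh where "lgh = \<alpha> * ((x + r ^ c * x') mod p) + \<beta> * ((a + r ^ c * a') mod p)"
  note exponent = induced_exponent_mult[of _ _ c \<alpha> x x' \<beta> a a', folded lg_def lh_def lgh_def]
  have prod: "induced_mat (\<alpha>, \<beta>) (x, a, c) * induced_mat (\<alpha>, \<beta>) (x', a', c') =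
      mat q q (\<lambda>(i, j). if i = (j + c' + c) mod q
        then z ^ (lg * r_inv_pow i) * z ^ (lh * r_inv_pow ((j + c') mod q)) else 0)"
    unfolding lg_def lh_def by (simp add: induced_mat_apply monomial_mat_mult)
  have prod_mult: "induced_mat (\<alpha>, \<beta>) (mult_G (x, a, c) (x', a', c')) =
      monomial_mat q ((c + c') mod q) (\<lambda>i. z ^ (lgh * r_inv_pow i))"
    unfolding lgh_def by (simp add: induced_mat_apply sd_mult_def)
  show ?thesis unfolding prod prod_mult
  proof (rule eq_matI)
    fix i j assume "i < dim_row (mat q q (\<lambda>(i, j). if i = (j + c' + c) mod q
        then z ^ (lg * r_inv_pow i) * z ^ (lh * r_inv_pow ((j + c') mod q)) else 0))"
      "j < dim_col (mat q q (\<lambda>(i, j). if i = (j + c' + c) mod q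
        then z ^ (lg * r_inv_pow i) * z ^ (lh * r_inv_pow ((j + c') mod q)) else 0))"
    then have ij: "i < q" "j < q" by auto
    show "monomial_mat q ((c + c') mod q) (\<lambda>i. z ^ (lgh * r_inv_pow i)) $$ (i, j) =
        mat q q (\<lambda>(i, j). if i = (j + c' + c) mod q
          then z ^ (lg * r_inv_pow i) * z ^ (lh * r_inv_pow ((j + c') mod q)) else 0) $$ (i, j)"
    proof (cases "i = (j + c' + c) mod q")
      case True
      then have c1: "i = (j + (c + c') mod q) mod q" and c2: "i = ((j + c') mod q + c) mod q"
        by (simp_all add: mod_simps ac_simps)
      show ?thesis unfolding monomial_mat_def index_mat(1)[OF ij] prod.case if_P[OF c1] if_P[OF True]
        by (rule exponent[OF c2])
    next
      case False
      then have "i \<noteq> (j + (c + c') mod q) mod q" by (simp add: mod_simps ac_simps)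
      then show ?thesis unfolding monomial_mat_def index_mat(1)[OF ij] prod.case if_not_P[OF False] by simp
    qed
  qed (simp_all add: monomial_mat_def)
qed

lemma induced_rep_obj: "induced_rep w \<in> rep_obj G mult_G sd_one"
proof -
  obtain \<alpha> \<beta> where w: "w = (\<alpha>, \<beta>)" by fastforce
  have "induced_mat w sd_one = 1\<^sub>m q"
    by (rule eq_matI) (auto simp: w induced_mat_apply monomial_mat_def sd_one_def)
  moreover have "induced_mat w (mult_G g h) = induced_mat w g * induced_mat w h" if "g \<in> G" "h \<in> G" for g h
    using that by (cases g rule: prod_cases3, cases h rule: prod_cases3) (simp add: w induced_mat_mult)
  ultimately show ?thesis
    unfolding rep_obj_def induced_rep_def by (auto simp: induced_mat_carrier)
qed

lemma induced_mat_diag: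
  "induced_mat (\<alpha>, \<beta>) (x, a, 0) = mat_diag q (\<lambda>i. z ^ ((\<alpha> * x + \<beta> * a) * r_inv_pow i))"
  by (rule eq_matI) (auto simp: induced_mat_apply monomial_mat_def mat_diag_def)

lemma end_scalar_induced:
  assumes x0: "x0 < p" and a0: "a0 < p" and one: "\<alpha> * x0 + \<beta> * a0 = 1"
  shows "end_scalar G (induced_rep (\<alpha>, \<beta>))"
  unfolding end_scalar_def
proof
  fix T assume T: "T \<in> rep_hom G (induced_rep (\<alpha>, \<beta>)) (induced_rep (\<alpha>, \<beta>))"
  have Tc: "T \<in> carrier_mat q q" using rep_hom_carrier[OF T] by (simp add: induced_rep_def)
  have comm: "T * induced_mat (\<alpha>, \<beta>) g = induced_mat (\<alpha>, \<beta>) g * T" if "g \<in> G" for g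
    using rep_hom_commute[OF T that] by (simp add: induced_rep_def)
  \<comment> \<open>\<open>(x\<^sub>0, a\<^sub>0, 0)\<close> acts diagonally with distinct eigenvalues, so \<open>T\<close> is diagonal;
    \<open>(0, 0, 1)\<close> acts as the cyclic shift, so \<open>T\<close> is scalar\<close>
  define t where "t i = T $$ (i, i)" for i
  have diag: "T = mat_diag q t"
    unfolding t_def
  proof (rule commute_mat_diag_imp_diag[OF Tc])
    show "T * mat_diag q (\<lambda>i. z ^ r_inv_pow i) = mat_diag q (\<lambda>i. z ^ r_inv_pow i) * T"
      using comm[of "(x0, a0, 0)"] x0 a0 q_pos by (simp add: induced_mat_diag one)
    show "z ^ r_inv_pow i \<noteq> z ^ r_inv_pow k" if "i < q" "k < q" "i \<noteq> k" for i k
      using r_inv_pow_inj that by (auto simp: z_pow_eq_iff)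
  qed
  have "induced_mat (\<alpha>, \<beta>) (0, 0, 1) = cyclic_shift_mat q"
    by (rule eq_matI) (auto simp: induced_mat_apply monomial_mat_def cyclic_shift_mat_def)
  then have "mat_diag q t * cyclic_shift_mat q = cyclic_shift_mat q * mat_diag q t"
    using comm[of "(0, 0, 1)"] q_gt_2 p_gt_1 diag by simp
  then have const: "t i = t 0" if "i < q" for i
    using mat_diag_commute_cyclic_shift_imp_const that by blast
  have "T = t 0 \<cdot>\<^sub>m 1\<^sub>m q"
  proof (rule eq_matI)
    fix i j assume "i < dim_row (t 0 \<cdot>\<^sub>m 1\<^sub>m q)" "j < dim_col (t 0 \<cdot>\<^sub>m 1\<^sub>m q)"
    then show "T $$ (i, j) = (t 0 \<cdot>\<^sub>m 1\<^sub>m q) $$ (i, j)"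
      using const[of j] unfolding diag by (simp add: mat_diag_def)
  qed (simp_all add: diag mat_diag_def)
  then show "\<exists>c. T = c \<cdot>\<^sub>m 1\<^sub>m (fst (induced_rep (\<alpha>, \<beta>)))" by (auto simp: induced_rep_def)
qed

lemma hom_vanishes_induced:
  assumes x0: "x0 < p" and a0: "a0 < p"
    and trivial: "p dvd \<alpha>' * x0 + \<beta>' * a0" and nontrivial: "\<not> p dvd \<alpha> * x0 + \<beta> * a0"
  shows "hom_vanishes G rep_unit (rep_tensor (induced_rep (\<alpha>, \<beta>)) (rep_power (induced_rep (\<alpha>', \<beta>')) n))"
  unfolding hom_vanishes_def
proof
  define N where "N = q ^ n"
  define d where "d i = z ^ ((\<alpha> * x0 + \<beta> * a0) * r_inv_pow i)" for i
  fix T assume "T \<in> rep_hom G rep_unit (rep_tensor (induced_rep (\<alpha>, \<beta>)) (rep_power (induced_rep (\<alpha>', \<beta>')) n))"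
  then have T: "T \<in> carrier_mat (q * N) 1"
    and fixed: "snd (rep_tensor (induced_rep (\<alpha>, \<beta>)) (rep_power (induced_rep (\<alpha>', \<beta>')) n)) (x0, a0, 0) * T = T"
    using x0 a0 q_pos unfolding rep_hom_unit_iff by (auto simp: rep_tensor_def fst_rep_power induced_rep_def N_def)
  have "(\<lambda>i. z ^ ((\<alpha>' * x0 + \<beta>' * a0) * r_inv_pow i)) = (\<lambda>_. 1)"
    using trivial by (intro ext) (simp add: z_pow_eq_one_iff)
  then have "induced_mat (\<alpha>', \<beta>') (x0, a0, 0) = 1\<^sub>m q"
    by (simp add: induced_mat_diag)
  then have "snd (rep_power (induced_rep (\<alpha>', \<beta>')) n) (x0, a0, 0) = 1\<^sub>m N"
    using rep_power_trivial[of "induced_rep (\<alpha>', \<beta>')" "(x0, a0, 0)" n]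
    by (simp add: induced_rep_def fst_rep_power N_def)
  then have "mat_diag (q * N) (\<lambda>l. d (l div N)) * T = T"
    using fixed by (simp add: rep_tensor_def induced_rep_def induced_mat_diag d_def kron_mat_diag_one)
  moreover have "d (l div N) \<noteq> 1" for l
    using nontrivial not_dvd_r_inv_pow prime_p by (simp add: d_def z_pow_eq_one_iff prime_dvd_mult_iff)
  ultimately show "T = 0\<^sub>m (fst (rep_tensor (induced_rep (\<alpha>, \<beta>)) (rep_power (induced_rep (\<alpha>', \<beta>')) n)))
      (fst (rep_unit :: (nat \<times> nat \<times> nat, 'k) rep))"
    using mat_diag_fixed_col_zero[OF T] by (simp add: rep_tensor_def fst_rep_power induced_rep_def rep_unit_def N_def)
qed

definition induced_triple :: "nat \<Rightarrow> (nat \<times> nat \<times> nat, 'k) rep" where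
  "induced_triple i = induced_rep ([(1, 0), (0, 1), (1, 1)] ! i)"

lemma separated_triple_induced: "separated_triple G mult_G sd_one induced_triple"
  unfolding separated_triple_def
proof (intro conjI allI impI)
  fix i :: nat assume "i < 3"
  then have "i = 0 \<or> i = 1 \<or> i = 2" by auto
  then show "end_scalar G (induced_triple i)"
    using end_scalar_induced[of 1 0 1 0] end_scalar_induced[of 0 1 0 1] end_scalar_induced[of 1 0 1 1] p_gt_1
    by (auto simp: induced_triple_def)
  show obj: "induced_triple i \<in> rep_obj G mult_G sd_one" by (simp add: induced_triple_def induced_rep_obj)
  have "2 \<le> fst (induced_triple i)" using q_gt_2 by (simp add: induced_triple_def induced_rep_def)
  then show "\<not> end_scalar G (rep_tensor (induced_triple i) (induced_triple i))"
    by (rule not_end_scalar_tensor_square[OF obj])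
next
  fix i j n :: nat assume "i < 3" "j < 3" "i \<noteq> j"
  then have "j = 0 \<and> (i = 1 \<or> i = 2) \<or> j = 1 \<and> (i = 0 \<or> i = 2) \<or> j = 2 \<and> (i = 0 \<or> i = 1)" by auto
  moreover have "\<not> p dvd 1" "\<not> p dvd p - 1" "p dvd 1 + (p - 1)" "p - 1 < p" "0 < p"
    using p_gt_1 by (auto dest: dvd_imp_le)
  ultimately show "hom_vanishes G rep_unit (rep_tensor (induced_triple i) (rep_power (induced_triple j) n))"
    using hom_vanishes_induced[of 0 1 1 0 0 1] hom_vanishes_induced[of 0 1 1 0 1 1]
      hom_vanishes_induced[of 1 0 0 1 1 0] hom_vanishes_induced[of 1 0 0 1 1 1]
      hom_vanishes_induced[of 1 "p - 1" 1 1 1 0] hom_vanishes_induced[of 1 "p - 1" 1 1 0 1]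
    by (auto simp: induced_triple_def)
qed

end

section \<open>No separated triple in \<open>Rep(G')\<close>\<close>

context pq_rep
begin

lemma rep_G'_structure:
  assumes X: "X \<in> rep_obj G mult_G' sd_one" and x: "x < p" and a: "a < p" and c: "c < q"
  shows rep_G'_carrier: "snd X (x, a, c) \<in> carrier_mat (fst X) (fst X)"
    and rep_G'_split: "snd X (x, a, c) = snd X (x, a, 0) * snd X (0, 0, c)"
    and rep_G'_twist: "snd X (x, a, c) = snd X (0, 0, c) * snd X ((r ^ c * x) mod p, (s ^ c * a) mod p, 0)"
proof -
  show "snd X (x, a, c) \<in> carrier_mat (fst X) (fst X)" using rep_obj_carrier[OF X] x a c by simp
  show "snd X (x, a, c) = snd X (x, a, 0) * snd X (0, 0, c)"
    using rep_obj_mult[OF X, of "(x, a, 0)" "(0, 0, c)"] x a c q_pos by (simp add: sd_mult_def)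
  have "[s ^ c * (r ^ c * x) = x] (mod p)" "[r ^ c * (s ^ c * a) = a] (mod p)"
    using cong_mult[OF r_pow_mult_s_pow cong_refl, of c x] cong_mult[OF r_pow_mult_s_pow cong_refl, of c a]
    by (simp_all add: mult_ac)
  then have "sd_mult p q r s (0, 0, c) ((r ^ c * x) mod p, (s ^ c * a) mod p, 0) = (x, a, c)"
    using x a c by (simp add: sd_mult_def cong_def mod_mult_right_eq)
  then show "snd X (x, a, c) = snd X (0, 0, c) * snd X ((r ^ c * x) mod p, (s ^ c * a) mod p, 0)"
    using rep_obj_mult[OF X, of "(0, 0, c)" "((r ^ c * x) mod p, (s ^ c * a) mod p, 0)"] x a c p_gt_1 by simp
qed

lemma rep_G'_translate:
  assumes "X \<in> rep_obj G mult_G' sd_one" "x0 < p" "a0 < p" "x < p" "a < p"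
  shows "snd X (x0, a0, 0) * snd X (x, a, 0) = snd X ((x0 + x) mod p, (a0 + a) mod p, 0)"
  using rep_obj_mult[OF assms(1), of "(x0, a0, 0)" "(x, a, 0)"] assms q_pos by (simp add: sd_mult_def)

lemma rep_G'_rotate:
  assumes "X \<in> rep_obj G mult_G' sd_one" "c < q" "c' < q"
  shows "snd X (0, 0, c) * snd X (0, 0, c') = snd X (0, 0, (c + c') mod q)"
  using rep_obj_mult[OF assms(1), of "(0, 0, c)" "(0, 0, c')"] assms p_gt_1 by (simp add: sd_mult_def)

lemma rep_G'_one: "X \<in> rep_obj G mult_G' sd_one \<Longrightarrow> snd X (0, 0, 0) = 1\<^sub>m (fst X)"
  using rep_obj_one by (fastforce simp: sd_one_def)

definition weight_vec :: "(nat \<times> nat \<times> nat, 'k) rep \<Rightarrow> nat \<Rightarrow> nat \<Rightarrow> 'k mat \<Rightarrow> bool" where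
  "weight_vec X \<alpha> \<beta> u \<longleftrightarrow> u \<in> carrier_mat (fst X) 1 \<and>
     (\<forall>x<p. \<forall>a<p. snd X (x, a, 0) * u = z ^ (\<alpha> * x + \<beta> * a) \<cdot>\<^sub>m u)"

lemma z_pow_linear_mod: "z ^ (\<alpha> * (x mod p) + \<beta> * (a mod p)) = z ^ (\<alpha> * x + \<beta> * a)"
  unfolding z_pow_eq_iff by (intro cong_add cong_mult cong_refl) (simp_all add: cong_def)

lemma weight_vec_twist:
  assumes X: "X \<in> rep_obj G mult_G' sd_one" and u: "weight_vec X \<alpha> \<beta> u" and c: "c < q"
  shows "weight_vec X (\<alpha> * r ^ c) (\<beta> * s ^ c) (snd X (0, 0, c) * u)"
  unfolding weight_vec_def
proof (intro conjI allI impI)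
  have uc: "u \<in> carrier_mat (fst X) 1" using u by (simp add: weight_vec_def)
  have Cc: "snd X (0, 0, c) \<in> carrier_mat (fst X) (fst X)" using rep_G'_carrier[OF X p_pos p_pos c] .
  show "snd X (0, 0, c) * u \<in> carrier_mat (fst X) 1" using Cc uc by simp
  fix x a assume x: "x < p" and a: "a < p"
  define x' a' where "x' = (r ^ c * x) mod p" and "a' = (s ^ c * a) mod p"
  have x'a': "x' < p" "a' < p" using p_pos by (simp_all add: x'_def a'_def)
  have "snd X (x, a, 0) * (snd X (0, 0, c) * u) = snd X (x, a, c) * u"
    using rep_G'_split[OF X x a c] rep_G'_carrier[OF X x a q_pos] Cc uc by simp
  also have "\<dots> = snd X (0, 0, c) * (snd X (x', a', 0) * u)"
    using rep_G'_twist[OF X x a c] rep_G'_carrier[OF X x'a' q_pos] Cc uc by (simp add: x'_def a'_def)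
  also have "\<dots> = z ^ (\<alpha> * x' + \<beta> * a') \<cdot>\<^sub>m (snd X (0, 0, c) * u)"
    using u x'a' by (simp add: weight_vec_def mult_smult_distrib[OF Cc uc])
  also have "z ^ (\<alpha> * x' + \<beta> * a') = z ^ (\<alpha> * r ^ c * x + \<beta> * s ^ c * a)"
    unfolding x'_def a'_def z_pow_linear_mod by (simp add: mult.assoc)
  finally show "snd X (x, a, 0) * (snd X (0, 0, c) * u) = z ^ (\<alpha> * r ^ c * x + \<beta> * s ^ c * a) \<cdot>\<^sub>m (snd X (0, 0, c) * u)" .
qed

lemma weight_vec_kron:
  assumes X1: "X1 \<in> rep_obj G mult_G' sd_one" and X2: "X2 \<in> rep_obj G mult_G' sd_one"
    and u1: "weight_vec X1 \<alpha>1 \<beta>1 u1" and u2: "weight_vec X2 \<alpha>2 \<beta>2 u2"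
  shows "weight_vec (rep_tensor X1 X2) (\<alpha>1 + \<alpha>2) (\<beta>1 + \<beta>2) (kron u1 u2)"
  unfolding weight_vec_def
proof (intro conjI allI impI)
  have c1: "u1 \<in> carrier_mat (fst X1) 1" and c2: "u2 \<in> carrier_mat (fst X2) 1"
    using u1 u2 by (auto simp: weight_vec_def)
  show "kron u1 u2 \<in> carrier_mat (fst (rep_tensor X1 X2)) 1"
    using kron_carrier_mat[OF c1 c2] by (simp add: rep_tensor_def)
  fix x a assume x: "x < p" and a: "a < p"
  have "snd (rep_tensor X1 X2) (x, a, 0) * kron u1 u2 = kron (snd X1 (x, a, 0) * u1) (snd X2 (x, a, 0) * u2)"
    unfolding rep_tensor_def using rep_G'_carrier[OF X1 x a q_pos] rep_G'_carrier[OF X2 x a q_pos] c1 c2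
    by (simp add: kron_mult_kron)
  also have "\<dots> = kron (z ^ (\<alpha>1 * x + \<beta>1 * a) \<cdot>\<^sub>m u1) (z ^ (\<alpha>2 * x + \<beta>2 * a) \<cdot>\<^sub>m u2)"
    using u1 u2 x a by (simp add: weight_vec_def)
  also have "\<dots> = z ^ ((\<alpha>1 + \<alpha>2) * x + (\<beta>1 + \<beta>2) * a) \<cdot>\<^sub>m kron u1 u2"
    by (simp add: kron_smult_left kron_smult_right smult_smult_mat power_add algebra_simps)
  finally show "snd (rep_tensor X1 X2) (x, a, 0) * kron u1 u2 = z ^ ((\<alpha>1 + \<alpha>2) * x + (\<beta>1 + \<beta>2) * a) \<cdot>\<^sub>m kron u1 u2" .
qed

lemma weight_vec_unit: "weight_vec rep_unit 0 0 (1\<^sub>m 1)"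
  unfolding weight_vec_def by (auto simp: rep_unit_def)

lemma weight_vec_zero_fixed:
  assumes w: "weight_vec Y \<alpha> \<beta> w" and "p dvd \<alpha>" "p dvd \<beta>" and "x < p" "a < p"
  shows "snd Y (x, a, 0) * w = w"
  using assms z_pow_eq_one_iff[of "\<alpha> * x + \<beta> * a"] by (auto simp: weight_vec_def)

definition weight_proj :: "(nat \<times> nat \<times> nat, 'k) rep \<Rightarrow> nat \<Rightarrow> nat \<Rightarrow> 'k mat" where
  "weight_proj X \<alpha> \<beta> = mat (fst X) (fst X)
     (\<lambda>(i, j). \<Sum>x<p. \<Sum>a<p. inverse (z ^ (\<alpha> * x + \<beta> * a)) * snd X (x, a, 0) $$ (i, j))"

lemma weight_proj_carrier: "weight_proj X \<alpha> \<beta> \<in> carrier_mat (fst X) (fst X)"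
  by (simp add: weight_proj_def)

lemma weight_proj_weight_vec:
  assumes X: "X \<in> rep_obj G mult_G' sd_one" and u: "weight_vec X \<gamma> \<delta> u"
  shows "weight_proj X \<alpha> \<beta> * u = (if [\<gamma> = \<alpha>] (mod p) \<and> [\<delta> = \<beta>] (mod p) then of_nat (p * p) else 0) \<cdot>\<^sub>m u"
proof (rule eq_matI)
  have uc: "u \<in> carrier_mat (fst X) 1" using u by (simp add: weight_vec_def)
  fix i j assume "i < dim_row ((if [\<gamma> = \<alpha>] (mod p) \<and> [\<delta> = \<beta>] (mod p) then of_nat (p * p) else 0) \<cdot>\<^sub>m u)"
    "j < dim_col ((if [\<gamma> = \<alpha>] (mod p) \<and> [\<delta> = \<beta>] (mod p) then of_nat (p * p) else 0) \<cdot>\<^sub>m u)"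
  then have i: "i < fst X" and j: "j < 1" using uc by auto
  have "(weight_proj X \<alpha> \<beta> * u) $$ (i, j) =
      (\<Sum>x<p. \<Sum>a<p. inverse (z ^ (\<alpha> * x + \<beta> * a)) * (snd X (x, a, 0) * u) $$ (i, j))"
    unfolding weight_proj_def using rep_G'_carrier[OF X _ _ q_pos] by (intro lincomb_mat_mult[OF _ uc i j]) auto
  also have "\<dots> = (\<Sum>x<p. \<Sum>a<p. inverse (z ^ (\<alpha> * x + \<beta> * a)) * z ^ (\<gamma> * x + \<delta> * a)) * u $$ (i, j)"
    using u i j carrier_matD[OF uc] by (simp add: weight_vec_def sum_distrib_right mult.assoc)
  finally show "(weight_proj X \<alpha> \<beta> * u) $$ (i, j) =
      ((if [\<gamma> = \<alpha>] (mod p) \<and> [\<delta> = \<beta>] (mod p) then of_nat (p * p) else 0) \<cdot>\<^sub>m u) $$ (i, j)"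
    using i j uc by (simp add: sum_character)
qed (use u in \<open>auto simp: weight_vec_def weight_proj_def\<close>)

lemma weight_proj_translate:
  assumes X: "X \<in> rep_obj G mult_G' sd_one" and x0: "x0 < p" and a0: "a0 < p"
  shows "snd X (x0, a0, 0) * weight_proj X \<alpha> \<beta> = z ^ (\<alpha> * x0 + \<beta> * a0) \<cdot>\<^sub>m weight_proj X \<alpha> \<beta>"
proof (rule eq_matI)
  define \<kappa> where "\<kappa> x a = inverse (z ^ (\<alpha> * x + \<beta> * a))" for x a
  have \<kappa>_shift: "\<kappa> x a = z ^ (\<alpha> * x0 + \<beta> * a0) * \<kappa> ((x0 + x) mod p) ((a0 + a) mod p)" for x a
  proof -
    have "z ^ (\<alpha> * ((x0 + x) mod p) + \<beta> * ((a0 + a) mod p)) = z ^ (\<alpha> * x0 + \<beta> * a0) * z ^ (\<alpha> * x + \<beta> * a)"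
      by (simp add: z_pow_linear_mod power_add[symmetric] algebra_simps)
    then show ?thesis using z_nonzero by (simp add: \<kappa>_def field_simps)
  qed
  fix i j assume "i < dim_row (z ^ (\<alpha> * x0 + \<beta> * a0) \<cdot>\<^sub>m weight_proj X \<alpha> \<beta>)"
    "j < dim_col (z ^ (\<alpha> * x0 + \<beta> * a0) \<cdot>\<^sub>m weight_proj X \<alpha> \<beta>)"
  then have i: "i < fst X" and j: "j < fst X" by (auto simp: weight_proj_def)
  define H where "H x a = \<kappa> x a * snd X (x, a, 0) $$ (i, j)" for x a
  have "(snd X (x0, a0, 0) * weight_proj X \<alpha> \<beta>) $$ (i, j) =
      (\<Sum>x<p. \<Sum>a<p. \<kappa> x a * (snd X (x0, a0, 0) * snd X (x, a, 0)) $$ (i, j))"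
    unfolding weight_proj_def \<kappa>_def using rep_G'_carrier[OF X _ _ q_pos]
    by (intro mult_lincomb_mat[OF _ _ i j]) (auto simp: x0 a0)
  also have "\<dots> = (\<Sum>x<p. \<Sum>a<p. \<kappa> x a * snd X ((x0 + x) mod p, (a0 + a) mod p, 0) $$ (i, j))"
    by (intro sum.cong refl) (simp add: rep_G'_translate[OF X x0 a0])
  also have "\<dots> = z ^ (\<alpha> * x0 + \<beta> * a0) * (\<Sum>x<p. \<Sum>a<p. H ((x0 + x) mod p) ((a0 + a) mod p))"
    by (subst \<kappa>_shift) (simp add: H_def sum_distrib_left mult.assoc)
  also have "(\<Sum>x<p. \<Sum>a<p. H ((x0 + x) mod p) ((a0 + a) mod p)) = (\<Sum>x<p. \<Sum>a<p. H x a)"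
    using sum_lessThan_shift_mod[OF p_pos, of "\<lambda>x. \<Sum>a<p. H x a"]
      sum_lessThan_shift_mod[OF p_pos, of "\<lambda>a. H _ a"] by simp
  finally show "(snd X (x0, a0, 0) * weight_proj X \<alpha> \<beta>) $$ (i, j) =
      (z ^ (\<alpha> * x0 + \<beta> * a0) \<cdot>\<^sub>m weight_proj X \<alpha> \<beta>) $$ (i, j)"
    using i j by (simp add: weight_proj_def H_def \<kappa>_def)
qed (use rep_G'_carrier[OF X x0 a0 q_pos] in \<open>auto simp: weight_proj_def\<close>)

lemma sum_weight_proj:
  assumes X: "X \<in> rep_obj G mult_G' sd_one" and i: "i < fst X" and j: "j < fst X"
  shows "(\<Sum>\<alpha><p. \<Sum>\<beta><p. weight_proj X \<alpha> \<beta> $$ (i, j)) = of_nat (p * p) * 1\<^sub>m (fst X) $$ (i, j)"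
proof -
  define f where "f x a = snd X (x, a, 0) $$ (i, j)" for x a
  have "(\<Sum>\<alpha><p. \<Sum>\<beta><p. weight_proj X \<alpha> \<beta> $$ (i, j)) =
      (\<Sum>\<alpha><p. \<Sum>\<beta><p. \<Sum>x<p. \<Sum>a<p. inverse (z ^ (\<alpha> * x + \<beta> * a)) * f x a)"
    using i j by (simp add: weight_proj_def f_def)
  also have "\<dots> = (\<Sum>x<p. \<Sum>a<p. (\<Sum>\<alpha><p. \<Sum>\<beta><p. inverse (z ^ (x * \<alpha> + a * \<beta>)) * z ^ (0 * \<alpha> + 0 * \<beta>)) * f x a)"
    by (subst sum_swap_pairs) (simp add: sum_distrib_left sum_distrib_right mult.commute)
  also have "\<dots> = (\<Sum>x<p. \<Sum>a<p. (if [0 = x] (mod p) \<and> [0 = a] (mod p) then of_nat (p * p) else 0) * f x a)"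
    by (simp only: sum_character)
  also have "\<dots> = (\<Sum>x<p. (if p dvd x then 1 else 0) * (\<Sum>a<p. (if p dvd a then of_nat (p * p) else 0) * f x a))"
    by (simp add: cong_sym_eq[of 0] cong_0_iff sum_distrib_left) (intro sum.cong refl, simp)
  also have "\<dots> = of_nat (p * p) * f 0 0"
    using p_pos by (simp add: sum_if_dvd_mult)
  also have "f 0 0 = 1\<^sub>m (fst X) $$ (i, j)" using rep_G'_one[OF X] by (simp add: f_def)
  finally show ?thesis .
qed

lemma weight_proj_zero_zero:
  assumes X: "X \<in> rep_obj G mult_G' sd_one"
    and zero: "\<And>\<alpha> \<beta>. \<alpha> < p \<Longrightarrow> \<beta> < p \<Longrightarrow> (\<alpha>, \<beta>) \<noteq> (0, 0) \<Longrightarrow> weight_proj X \<alpha> \<beta> = 0\<^sub>m (fst X) (fst X)"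
  shows "weight_proj X 0 0 = of_nat (p * p) \<cdot>\<^sub>m 1\<^sub>m (fst X)"
proof (rule eq_matI)
  fix i j assume "i < dim_row (of_nat (p * p) \<cdot>\<^sub>m 1\<^sub>m (fst X) :: 'k mat)"
    "j < dim_col (of_nat (p * p) \<cdot>\<^sub>m 1\<^sub>m (fst X) :: 'k mat)"
  then have i: "i < fst X" and j: "j < fst X" by auto
  have row: "(\<Sum>\<beta><p. weight_proj X \<alpha> \<beta> $$ (i, j)) = (if \<alpha> = 0 then weight_proj X 0 0 $$ (i, j) else 0)"
    if "\<alpha> \<in> {..<p}" for \<alpha>
  proof -
    have "(\<Sum>\<beta><p. weight_proj X \<alpha> \<beta> $$ (i, j)) =
        (\<Sum>\<beta><p. if \<alpha> = 0 \<and> \<beta> = 0 then weight_proj X 0 0 $$ (i, j) else 0)"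
      using zero that i j by (intro sum.cong refl) auto
    then show ?thesis using p_pos by (cases "\<alpha> = 0") simp_all
  qed
  have "(\<Sum>\<alpha><p. \<Sum>\<beta><p. weight_proj X \<alpha> \<beta> $$ (i, j)) = (\<Sum>\<alpha><p. if \<alpha> = 0 then weight_proj X 0 0 $$ (i, j) else 0)"
    by (rule sum.cong[OF refl row])
  then have "(\<Sum>\<alpha><p. \<Sum>\<beta><p. weight_proj X \<alpha> \<beta> $$ (i, j)) = weight_proj X 0 0 $$ (i, j)"
    using p_pos by simp
  then show "weight_proj X 0 0 $$ (i, j) = (of_nat (p * p) \<cdot>\<^sub>m 1\<^sub>m (fst X)) $$ (i, j)"
    using sum_weight_proj[OF X i j] i j by simp
qed (simp_all add: weight_proj_def)

lemma abelian_part_trivial_if_weight_proj_zero: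
  assumes X: "X \<in> rep_obj G mult_G' sd_one"
    and zero: "\<And>\<alpha> \<beta>. \<alpha> < p \<Longrightarrow> \<beta> < p \<Longrightarrow> (\<alpha>, \<beta>) \<noteq> (0, 0) \<Longrightarrow> weight_proj X \<alpha> \<beta> = 0\<^sub>m (fst X) (fst X)"
    and x0: "x0 < p" and a0: "a0 < p"
  shows "snd X (x0, a0, 0) = 1\<^sub>m (fst X)"
proof -
  have P0: "weight_proj X 0 0 = of_nat (p * p) \<cdot>\<^sub>m 1\<^sub>m (fst X)" by (rule weight_proj_zero_zero[OF X zero])
  have V: "snd X (x0, a0, 0) \<in> carrier_mat (fst X) (fst X)" by (rule rep_G'_carrier[OF X x0 a0 q_pos])
  have "snd X (x0, a0, 0) * weight_proj X 0 0 = weight_proj X 0 0"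
    using weight_proj_translate[OF X x0 a0, of 0 0] by (simp add: one_smult_mat)
  then have eq: "of_nat (p * p) \<cdot>\<^sub>m snd X (x0, a0, 0) = of_nat (p * p) \<cdot>\<^sub>m 1\<^sub>m (fst X)"
    unfolding P0 by (simp add: mult_smult_distrib[OF V one_carrier_mat] right_mult_one_mat[OF V])
  have "(of_nat (p * p) :: 'k) \<noteq> 0" using p_pos by simp
  then show ?thesis using eq by (rule smult_mat_cancel)
qed

lemma rotation_scalar:
  assumes X: "X \<in> rep_obj G mult_G' sd_one" and \<mu>1: "snd X (0, 0, 1) = \<mu>1 \<cdot>\<^sub>m 1\<^sub>m (fst X)"
    and c: "c < q"
  shows "\<exists>\<mu>. snd X (0, 0, c) = \<mu> \<cdot>\<^sub>m 1\<^sub>m (fst X)"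
  using c
proof (induction c)
  case 0
  have "snd X (0, 0, 0) = 1 \<cdot>\<^sub>m 1\<^sub>m (fst X)" using rep_G'_one[OF X] by (auto intro: eq_matI)
  then show ?case ..
next
  case (Suc c)
  then obtain \<mu> where \<mu>: "snd X (0, 0, c) = \<mu> \<cdot>\<^sub>m 1\<^sub>m (fst X)" by auto
  have "snd X (0, 0, Suc c) = snd X (0, 0, 1) * snd X (0, 0, c)"
    using rep_G'_rotate[OF X _ Suc_lessD[OF Suc.prems], of 1] Suc.prems q_gt_2 by simp
  also have "\<dots> = (\<mu>1 * \<mu>) \<cdot>\<^sub>m 1\<^sub>m (fst X)"
    unfolding \<mu>1 \<mu> by (auto intro: eq_matI)
  finally show ?case ..
qed

lemma dim_le_one_if_abelian_part_trivial:
  assumes X: "X \<in> rep_obj G mult_G' sd_one"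
    and trivial: "\<And>x a. x < p \<Longrightarrow> a < p \<Longrightarrow> snd X (x, a, 0) = 1\<^sub>m (fst X)"
    and scalar: "end_scalar G X"
  shows "fst X \<le> 1"
proof (rule dim_le_one_if_scalar_action[OF X _ scalar])
  have q1: "1 < q" using q_gt_2 by simp
  have action: "snd X (x, a, c) = snd X (0, 0, c)" if "x < p" "a < p" "c < q" for x a c
    using rep_G'_split[OF X that] trivial that rep_G'_carrier[OF X p_pos p_pos \<open>c < q\<close>] by simp
  have "snd X (0, 0, 1) \<in> rep_hom G X X"
  proof (rule rep_homI)
    show "snd X (0, 0, 1) \<in> carrier_mat (fst X) (fst X)" by (rule rep_G'_carrier[OF X p_pos p_pos q1])
    fix g assume "g \<in> G"
    then obtain x a c where g: "g = (x, a, c)" "x < p" "a < p" "c < q" by (cases g rule: prod_cases3) auto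
    show "snd X (0, 0, 1) * snd X g = snd X g * snd X (0, 0, 1)"
      using rep_G'_rotate[OF X q1 g(4)] rep_G'_rotate[OF X g(4) q1] action[OF g(2-4)] g(1)
      by (simp add: add.commute)
  qed
  then obtain \<mu>1 where \<mu>1: "snd X (0, 0, 1) = \<mu>1 \<cdot>\<^sub>m 1\<^sub>m (fst X)" using scalar unfolding end_scalar_def by blast
  fix g assume "g \<in> G"
  then obtain x a c where g: "g = (x, a, c)" "x < p" "a < p" "c < q" by (cases g rule: prod_cases3) auto
  then obtain \<mu> where "snd X (0, 0, c) = \<mu> \<cdot>\<^sub>m 1\<^sub>m (fst X)" using rotation_scalar[OF X \<mu>1] by blast
  then show "\<exists>c. snd X g = c \<cdot>\<^sub>m 1\<^sub>m (fst X)" using action[OF g(2-4)] g(1) by auto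
qed

lemma exists_weight_vec_if_weight_proj_nonzero:
  assumes X: "X \<in> rep_obj G mult_G' sd_one" and nonzero: "weight_proj X \<alpha> \<beta> \<noteq> 0\<^sub>m (fst X) (fst X)"
  shows "\<exists>u. weight_vec X \<alpha> \<beta> u \<and> u \<noteq> 0\<^sub>m (fst X) 1"
proof -
  obtain i k where ik: "i < fst X" "k < fst X" "weight_proj X \<alpha> \<beta> $$ (i, k) \<noteq> 0"
  proof -
    have "\<exists>i<fst X. \<exists>k<fst X. weight_proj X \<alpha> \<beta> $$ (i, k) \<noteq> 0"
    proof (rule ccontr)
      assume "\<not> ?thesis"
      then have "weight_proj X \<alpha> \<beta> = 0\<^sub>m (fst X) (fst X)" by (intro eq_matI) (auto simp: weight_proj_def)
      then show False using nonzero by simp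
    qed
    then show ?thesis using that by blast
  qed
  define e :: "'k mat" where "e = mat (fst X) 1 (\<lambda>(l, _). if l = k then 1 else 0)"
  define u where "u = weight_proj X \<alpha> \<beta> * e"
  have P: "weight_proj X \<alpha> \<beta> \<in> carrier_mat (fst X) (fst X)" and e: "e \<in> carrier_mat (fst X) 1"
    by (simp_all add: weight_proj_carrier e_def)
  have "weight_vec X \<alpha> \<beta> u"
    unfolding weight_vec_def
  proof (intro conjI allI impI)
    show "u \<in> carrier_mat (fst X) 1" using P e by (simp add: u_def)
    fix x a assume "x < p" "a < p"
    have V: "snd X (x, a, 0) \<in> carrier_mat (fst X) (fst X)" by (rule rep_G'_carrier[OF X \<open>x < p\<close> \<open>a < p\<close> q_pos])
    have "snd X (x, a, 0) * u = (snd X (x, a, 0) * weight_proj X \<alpha> \<beta>) * e"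
      unfolding u_def using V P e by (simp add: assoc_mult_mat[OF V P e])
    then show "snd X (x, a, 0) * u = z ^ (\<alpha> * x + \<beta> * a) \<cdot>\<^sub>m u"
      unfolding weight_proj_translate[OF X \<open>x < p\<close> \<open>a < p\<close>] u_def using P e by (simp add: mult_smult_assoc_mat)
  qed
  moreover have "u \<noteq> 0\<^sub>m (fst X) 1"
  proof
    assume "u = 0\<^sub>m (fst X) 1"
    then have "u $$ (i, 0) = 0" using ik by simp
    moreover have "u $$ (i, 0) = weight_proj X \<alpha> \<beta> $$ (i, k)"
      unfolding u_def e_def using unit_col_mult[OF P ik(1,2)] .
    ultimately show False using ik by simp
  qed
  ultimately show ?thesis by blast
qed

lemma exists_nonzero_weight_vec:
  assumes X: "X \<in> rep_obj G mult_G' sd_one" and scalar: "end_scalar G X"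
    and not_scalar: "\<not> end_scalar G (rep_tensor X X)"
  shows "\<exists>\<alpha> \<beta> u. \<not> (p dvd \<alpha> \<and> p dvd \<beta>) \<and> weight_vec X \<alpha> \<beta> u \<and> u \<noteq> 0\<^sub>m (fst X) 1"
proof -
  have "\<not> fst X \<le> 1"
  proof
    assume "fst X \<le> 1"
    then have "fst (rep_tensor X X) \<le> 1"
      using mult_le_mono[of "fst X" 1 "fst X" 1] by (simp add: rep_tensor_def)
    then show False using not_scalar end_scalar_if_dim_le_one by blast
  qed
  then obtain x0 a0 where "x0 < p" "a0 < p" "snd X (x0, a0, 0) \<noteq> 1\<^sub>m (fst X)"
    using dim_le_one_if_abelian_part_trivial[OF X _ scalar] by blast
  then obtain \<alpha> \<beta> where "\<alpha> < p" "\<beta> < p" "(\<alpha>, \<beta>) \<noteq> (0, 0)"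
    and "weight_proj X \<alpha> \<beta> \<noteq> 0\<^sub>m (fst X) (fst X)"
    using abelian_part_trivial_if_weight_proj_zero[OF X] by blast
  moreover from this have "\<not> (p dvd \<alpha> \<and> p dvd \<beta>)" by (auto dest: dvd_imp_le)
  ultimately show ?thesis using exists_weight_vec_if_weight_proj_nonzero[OF X] by blast
qed

lemma weight_vec_kron_pow:
  assumes Z: "Z \<in> rep_obj G mult_G' sd_one" and y: "weight_vec Z \<gamma> \<delta> y"
    and Q: "weight_vec (rep_power Z n) \<gamma>' \<delta>' Q"
  shows "weight_vec (rep_power Z (k + n)) (k * \<gamma> + \<gamma>') (k * \<delta> + \<delta>') (kron_pow y k Q)"
proof (induction k)
  case (Suc k)
  from weight_vec_kron[OF Z rep_power_obj[OF Z] y Suc.IH] show ?case by (simp add: add.assoc)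
qed (use Q in simp)

lemma rotation_nonzero:
  assumes Z: "Z \<in> rep_obj G mult_G' sd_one" and u: "u \<in> carrier_mat (fst Z) 1" "u \<noteq> 0\<^sub>m (fst Z) 1"
    and c: "c < q"
  shows "snd Z (0, 0, c) * u \<noteq> 0\<^sub>m (fst Z) 1"
proof
  assume zero: "snd Z (0, 0, c) * u = 0\<^sub>m (fst Z) 1"
  have c': "(q - c) mod q < q" using q_pos by simp
  have inverse: "snd Z (0, 0, (q - c) mod q) * snd Z (0, 0, c) = 1\<^sub>m (fst Z)"
    using rep_G'_rotate[OF Z c' c] rep_G'_one[OF Z] c by (simp add: mod_add_left_eq)
  have "u = (snd Z (0, 0, (q - c) mod q) * snd Z (0, 0, c)) * u" using inverse u by simp
  also have "\<dots> = snd Z (0, 0, (q - c) mod q) * (snd Z (0, 0, c) * u)"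
    using rep_G'_carrier[OF Z p_pos p_pos c'] rep_G'_carrier[OF Z p_pos p_pos c] u by (simp add: assoc_mult_mat)
  also have "\<dots> = 0\<^sub>m (fst Z) 1" unfolding zero using rep_G'_carrier[OF Z p_pos p_pos c'] by simp
  finally show False using u by simp
qed

lemma orbit_sum_rep_hom_unit:
  assumes Y: "Y \<in> rep_obj G mult_G' sd_one" and w: "weight_vec Y \<alpha> \<beta> w" and "p dvd \<alpha>" "p dvd \<beta>"
  shows "col_sum (fst Y) (\<lambda>c. snd Y (0, 0, c) * w) q \<in> rep_hom G rep_unit Y"
  unfolding rep_hom_unit_iff
proof (intro conjI ballI)
  show "col_sum (fst Y) (\<lambda>c. snd Y (0, 0, c) * w) q \<in> carrier_mat (fst Y) 1" by (rule col_sum_carrier)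
  have wc: "w \<in> carrier_mat (fst Y) 1" using w by (simp add: weight_vec_def)
  fix g assume "g \<in> G"
  then obtain x a c0 where g: "g = (x, a, c0)" "x < p" "a < p" "c0 < q" by (cases g rule: prod_cases3) auto
  have shifted: "snd Y g * (snd Y (0, 0, c) * w) = snd Y (0, 0, (c0 + c) mod q) * w" if c: "c < q" for c
  proof -
    define x' a' where "x' = (r ^ ((c0 + c) mod q) * x) mod p" and "a' = (s ^ ((c0 + c) mod q) * a) mod p"
    have c': "(c0 + c) mod q < q" using q_pos by simp
    have "x' < p" "a' < p" using p_pos by (simp_all add: x'_def a'_def)
    have "snd Y g * (snd Y (0, 0, c) * w) = snd Y (mult_G' g (0, 0, c)) * w"
      using rep_obj_mult[OF Y, of g "(0, 0, c)"] g c rep_G'_carrier[OF Y g(2-4)] rep_G'_carrier[OF Y p_pos p_pos c] wc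
      by (simp add: assoc_mult_mat)
    also have "mult_G' g (0, 0, c) = (x, a, (c0 + c) mod q)" using g by (simp add: sd_mult_def)
    also have "snd Y (x, a, (c0 + c) mod q) * w = snd Y (0, 0, (c0 + c) mod q) * (snd Y (x', a', 0) * w)"
      using rep_G'_twist[OF Y g(2,3) c'] rep_G'_carrier[OF Y p_pos p_pos c'] rep_G'_carrier[OF Y \<open>x' < p\<close> \<open>a' < p\<close> q_pos] wc
      by (simp add: x'_def a'_def assoc_mult_mat)
    also have "snd Y (x', a', 0) * w = w"
      using weight_vec_zero_fixed[OF w assms(3,4) \<open>x' < p\<close> \<open>a' < p\<close>] .
    finally show ?thesis .
  qed
  have "snd Y g * col_sum (fst Y) (\<lambda>c. snd Y (0, 0, c) * w) q = col_sum (fst Y) (\<lambda>c. snd Y g * (snd Y (0, 0, c) * w)) q"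
    using rep_G'_carrier[OF Y g(2-4)] rep_G'_carrier[OF Y p_pos p_pos] wc g(1)
    by (intro mult_col_sum) (auto intro: mult_carrier_mat)
  also have "\<dots> = col_sum (fst Y) (\<lambda>c. snd Y (0, 0, (c0 + c) mod q) * w) q"
    unfolding col_sum_def using shifted by (intro eq_matI) auto
  also have "\<dots> = col_sum (fst Y) (\<lambda>c. snd Y (0, 0, c) * w) q"
    unfolding col_sum_def using sum_lessThan_shift_mod[OF q_pos] by (intro eq_matI) auto
  finally show "snd Y g * col_sum (fst Y) (\<lambda>c. snd Y (0, 0, c) * w) q = col_sum (fst Y) (\<lambda>c. snd Y (0, 0, c) * w) q" .
qed

text \<open>The projection onto the weight \<open>(\<alpha>, \<beta>)\<close> of the first factor kills the terms of the orbit sum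
  with \<open>c \<noteq> 0\<close>, because the twisted weights \<open>(\<alpha> r\<^sup>c, \<beta> s\<^sup>c)\<close> differ from \<open>(\<alpha>, \<beta>)\<close>.\<close>

lemma weight_proj_kron_rotation:
  assumes Z: "Z \<in> rep_obj G mult_G' sd_one" and P: "P \<in> rep_obj G mult_G' sd_one"
    and u: "weight_vec Z \<alpha> \<beta> u" and free: "\<not> (p dvd \<alpha> \<and> p dvd \<beta>)"
    and Q: "Q \<in> carrier_mat (fst P) 1" and c: "c < q"
  shows "kron (weight_proj Z \<alpha> \<beta>) (1\<^sub>m (fst P)) * (snd (rep_tensor Z P) (0, 0, c) * kron u Q) =
    (if c = 0 then of_nat (p * p) \<cdot>\<^sub>m kron u Q else 0\<^sub>m (fst Z * fst P) 1)"
proof -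
  have uc: "u \<in> carrier_mat (fst Z) 1" using u by (simp add: weight_vec_def)
  have Zc: "snd Z (0, 0, c) \<in> carrier_mat (fst Z) (fst Z)" and Pc: "snd P (0, 0, c) \<in> carrier_mat (fst P) (fst P)"
    using rep_G'_carrier[OF Z p_pos p_pos c] rep_G'_carrier[OF P p_pos p_pos c] .
  have "kron (weight_proj Z \<alpha> \<beta>) (1\<^sub>m (fst P)) * (snd (rep_tensor Z P) (0, 0, c) * kron u Q) =
      kron (weight_proj Z \<alpha> \<beta> * (snd Z (0, 0, c) * u)) (snd P (0, 0, c) * Q)"
    using Zc Pc uc Q weight_proj_carrier[of Z \<alpha> \<beta>]
    by (simp add: rep_tensor_def kron_mult_kron[of _ "fst Z" "fst Z" _ 1 _ "fst P" "fst P" _ 1])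
  also have "weight_proj Z \<alpha> \<beta> * (snd Z (0, 0, c) * u) =
      (if [\<alpha> * r ^ c = \<alpha>] (mod p) \<and> [\<beta> * s ^ c = \<beta>] (mod p) then of_nat (p * p) else 0) \<cdot>\<^sub>m (snd Z (0, 0, c) * u)"
    by (rule weight_proj_weight_vec[OF Z weight_vec_twist[OF Z u c]])
  finally show ?thesis
    using twisted_weight_not_fixed[OF free, of c] c Zc Pc uc Q rep_G'_one[OF Z] rep_G'_one[OF P]
    by (cases "c = 0") (auto simp: kron_smult_left intro!: eq_matI simp: index_kron less_mult_imp_div_less)
qed

lemma orbit_sum_nonzero:
  assumes Z: "Z \<in> rep_obj G mult_G' sd_one" and P: "P \<in> rep_obj G mult_G' sd_one"
    and u: "weight_vec Z \<alpha> \<beta> u" "u \<noteq> 0\<^sub>m (fst Z) 1" and free: "\<not> (p dvd \<alpha> \<and> p dvd \<beta>)"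
    and Q: "Q \<in> carrier_mat (fst P) 1" "Q \<noteq> 0\<^sub>m (fst P) 1"
  shows "col_sum (fst Z * fst P) (\<lambda>c. snd (rep_tensor Z P) (0, 0, c) * kron u Q) q \<noteq> 0\<^sub>m (fst Z * fst P) 1"
proof
  define N where "N = fst Z * fst P"
  define W where "W = col_sum N (\<lambda>c. snd (rep_tensor Z P) (0, 0, c) * kron u Q) q"
  define proj where "proj = kron (weight_proj Z \<alpha> \<beta>) (1\<^sub>m (fst P))"
  assume "col_sum (fst Z * fst P) (\<lambda>c. snd (rep_tensor Z P) (0, 0, c) * kron u Q) q = 0\<^sub>m (fst Z * fst P) 1"
  then have W0: "W = 0\<^sub>m N 1" by (simp add: W_def N_def)
  have uc: "u \<in> carrier_mat (fst Z) 1" using u by (simp add: weight_vec_def)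
  have projc: "proj \<in> carrier_mat N N" by (simp add: proj_def N_def weight_proj_carrier)
  have projected: "proj * (snd (rep_tensor Z P) (0, 0, c) * kron u Q) =
      (if c = 0 then of_nat (p * p) \<cdot>\<^sub>m kron u Q else 0\<^sub>m N 1)" if "c < q" for c
    unfolding proj_def N_def using weight_proj_kron_rotation[OF Z P u(1) free Q(1) that] .
  have "proj * W = col_sum N (\<lambda>c. if c = 0 then of_nat (p * p) \<cdot>\<^sub>m kron u Q else 0\<^sub>m N 1) q"
  proof -
    have "proj * W = col_sum N (\<lambda>c. proj * (snd (rep_tensor Z P) (0, 0, c) * kron u Q)) q"
      unfolding W_def
    proof (intro mult_col_sum[OF projc])
      fix c assume "c < q"
      have "snd (rep_tensor Z P) (0, 0, c) \<in> carrier_mat N N"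
        using rep_G'_carrier[OF rep_tensor_obj[OF Z P] p_pos p_pos \<open>c < q\<close>] by (simp add: rep_tensor_def N_def)
      then show "snd (rep_tensor Z P) (0, 0, c) * kron u Q \<in> carrier_mat N 1"
        using kron_carrier_mat[OF uc Q(1)] by (simp add: N_def)
    qed
    also have "\<dots> = col_sum N (\<lambda>c. if c = 0 then of_nat (p * p) \<cdot>\<^sub>m kron u Q else 0\<^sub>m N 1) q"
      unfolding col_sum_def using projected by (intro eq_matI) auto
    finally show ?thesis .
  qed
  also have "\<dots> = of_nat (p * p) \<cdot>\<^sub>m kron u Q"
    using q_pos uc Q by (intro eq_matI) (auto simp: col_sum_def N_def if_distrib[of "\<lambda>A. A $$ _"] cong: if_cong)
  finally have "of_nat (p * p) \<cdot>\<^sub>m kron u Q = 0\<^sub>m N 1" using W0 projc by simp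
  moreover have "kron u Q \<noteq> 0\<^sub>m N 1" unfolding N_def by (rule kron_col_nonzero[OF uc u(2) Q])
  ultimately show False using p_pos uc Q by (auto simp: N_def intro: smult_mat_cancel[of "of_nat (p * p)"])
qed

lemma exists_weight_vec_rep_power:
  assumes Z: "Z \<in> rep_obj G mult_G' sd_one" and u: "weight_vec Z \<gamma> \<delta> u" "u \<noteq> 0\<^sub>m (fst Z) 1"
  shows "\<exists>Q. weight_vec (rep_power Z (k1 + k0)) (k1 * (\<gamma> * r) + k0 * \<gamma>) (k1 * (\<delta> * s) + k0 * \<delta>) Q \<and>
    Q \<noteq> 0\<^sub>m (fst Z ^ (k1 + k0)) 1"
proof -
  define Q0 where "Q0 = kron_pow u k0 (1\<^sub>m 1)"
  define Q where "Q = kron_pow (snd Z (0, 0, 1) * u) k1 Q0"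
  have uc: "u \<in> carrier_mat (fst Z) 1" using u by (simp add: weight_vec_def)
  have "weight_vec (rep_power Z (k0 + 0)) (k0 * \<gamma> + 0) (k0 * \<delta> + 0) Q0"
    unfolding Q0_def by (rule weight_vec_kron_pow[OF Z u(1)]) (use weight_vec_unit in simp)
  moreover have "weight_vec Z (\<gamma> * r ^ 1) (\<delta> * s ^ 1) (snd Z (0, 0, 1) * u)"
    using q_gt_2 by (intro weight_vec_twist[OF Z u(1)]) simp
  ultimately have "weight_vec (rep_power Z (k1 + k0)) (k1 * (\<gamma> * r) + k0 * \<gamma>) (k1 * (\<delta> * s) + k0 * \<delta>) Q"
    using weight_vec_kron_pow[OF Z, of "\<gamma> * r ^ 1" "\<delta> * s ^ 1" _ k0 "k0 * \<gamma>" "k0 * \<delta>" Q0 k1]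
    by (simp add: Q_def)
  moreover have "(1\<^sub>m 1 :: 'k mat) \<noteq> 0\<^sub>m 1 1"
  proof
    assume "(1\<^sub>m 1 :: 'k mat) = 0\<^sub>m 1 1"
    then have "(1\<^sub>m 1 :: 'k mat) $$ (0, 0) = 0\<^sub>m 1 1 $$ (0, 0)" by simp
    then show False by simp
  qed
  then have "Q0 \<in> carrier_mat (fst Z ^ k0 * 1) 1 \<and> Q0 \<noteq> 0\<^sub>m (fst Z ^ k0 * 1) 1"
    unfolding Q0_def by (intro kron_pow_nonzero[OF uc u(2)]) auto
  moreover have "snd Z (0, 0, 1) * u \<in> carrier_mat (fst Z) 1"
    using rep_G'_carrier[OF Z p_pos p_pos, of 1] q_gt_2 uc by simp
  moreover have "snd Z (0, 0, 1) * u \<noteq> 0\<^sub>m (fst Z) 1"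
    using rotation_nonzero[OF Z uc u(2), of 1] q_gt_2 by simp
  ultimately have "Q \<noteq> 0\<^sub>m (fst Z ^ k1 * (fst Z ^ k0 * 1)) 1"
    unfolding Q_def using kron_pow_nonzero by blast
  then show ?thesis
    using \<open>weight_vec (rep_power Z (k1 + k0)) _ _ Q\<close> by (auto simp: power_add)
qed

lemma not_hom_vanishes_if_cancellable:
  assumes Zi: "Zi \<in> rep_obj G mult_G' sd_one" and Zj: "Zj \<in> rep_obj G mult_G' sd_one"
    and ui: "weight_vec Zi \<alpha> \<beta> ui" "ui \<noteq> 0\<^sub>m (fst Zi) 1" and free: "\<not> (p dvd \<alpha> \<and> p dvd \<beta>)"
    and uj: "weight_vec Zj \<gamma> \<delta> uj" "uj \<noteq> 0\<^sub>m (fst Zj) 1"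
    and cancel: "cancellable (\<alpha>, \<beta>) (\<gamma>, \<delta>)"
  shows "\<exists>n. \<not> hom_vanishes G rep_unit (rep_tensor Zi (rep_power Zj n))"
proof -
  obtain k0 k1 where dvd: "p dvd \<alpha> + k0 * \<gamma> + k1 * r * \<gamma>" "p dvd \<beta> + k0 * \<delta> + k1 * s * \<delta>"
    using cancel unfolding cancellable_def by auto
  define P where "P = rep_power Zj (k1 + k0)"
  have P: "P \<in> rep_obj G mult_G' sd_one" by (simp add: P_def rep_power_obj[OF Zj])
  obtain Q where Q: "weight_vec P (k1 * (\<gamma> * r) + k0 * \<gamma>) (k1 * (\<delta> * s) + k0 * \<delta>) Q"
    and "Q \<noteq> 0\<^sub>m (fst P) 1"
    using exists_weight_vec_rep_power[OF Zj uj] by (auto simp: P_def fst_rep_power)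
  moreover have "Q \<in> carrier_mat (fst P) 1" using Q by (simp add: weight_vec_def)
  ultimately have "col_sum (fst Zi * fst P) (\<lambda>c. snd (rep_tensor Zi P) (0, 0, c) * kron ui Q) q \<noteq> 0\<^sub>m (fst Zi * fst P) 1"
    using orbit_sum_nonzero[OF Zi P ui free] by blast
  moreover
  \<comment> \<open>\<open>u\<^sub>i \<otimes> Q\<close> has weight divisible by \<open>p\<close>, so its orbit sum is an invariant vector\<close>
  have "weight_vec (rep_tensor Zi P) (\<alpha> + (k1 * (\<gamma> * r) + k0 * \<gamma>)) (\<beta> + (k1 * (\<delta> * s) + k0 * \<delta>)) (kron ui Q)"
    by (rule weight_vec_kron[OF Zi P ui(1) Q])
  moreover have "p dvd \<alpha> + (k1 * (\<gamma> * r) + k0 * \<gamma>)" "p dvd \<beta> + (k1 * (\<delta> * s) + k0 * \<delta>)"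
    using dvd by (simp_all add: algebra_simps)
  ultimately have "\<not> hom_vanishes G rep_unit (rep_tensor Zi P)"
    using orbit_sum_rep_hom_unit[OF rep_tensor_obj[OF Zi P]] unfolding hom_vanishes_def
    by (fastforce simp: rep_tensor_def rep_unit_def)
  then show ?thesis unfolding P_def by blast
qed

theorem no_separated_triple:
  fixes X :: "nat \<Rightarrow> (nat \<times> nat \<times> nat, 'k) rep"
  shows "\<not> separated_triple G mult_G' sd_one X"
proof
  assume sep: "separated_triple G mult_G' sd_one X"
  define good where "good i t \<longleftrightarrow> \<not> (p dvd fst t \<and> p dvd fst (snd t)) \<and>
      weight_vec (X i) (fst t) (fst (snd t)) (snd (snd t)) \<and> snd (snd t) \<noteq> 0\<^sub>m (fst (X i)) 1" for i t
  define t where "t i = (SOME t. good i t)" for i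
  have t: "good i (t i)" if "i < 3" for i
  proof -
    have "X i \<in> rep_obj G mult_G' sd_one" "end_scalar G (X i)" "\<not> end_scalar G (rep_tensor (X i) (X i))"
      using sep that unfolding separated_triple_def by blast+
    then obtain \<alpha> \<beta> u where "\<not> (p dvd \<alpha> \<and> p dvd \<beta>)" "weight_vec (X i) \<alpha> \<beta> u" "u \<noteq> 0\<^sub>m (fst (X i)) 1"
      using exists_nonzero_weight_vec by blast
    then have "good i (\<alpha>, \<beta>, u)" by (simp add: good_def)
    then show ?thesis unfolding t_def by (rule someI)
  qed
  define w where "w i = (fst (t i), fst (snd (t i)))" for i
  obtain i j where ij: "i < 3" "j < 3" "i \<noteq> j" and "cancellable (w i) (w j)"
    using exists_cancellable_pair[of w] t by (auto simp: w_def good_def)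
  moreover have "X i \<in> rep_obj G mult_G' sd_one" "X j \<in> rep_obj G mult_G' sd_one"
    using sep ij unfolding separated_triple_def by blast+
  ultimately obtain n where "\<not> hom_vanishes G rep_unit (rep_tensor (X i) (rep_power (X j) n))"
    using not_hom_vanishes_if_cancellable t[OF ij(1)] t[OF ij(2)] unfolding w_def good_def by blast
  then show False using sep ij unfolding separated_triple_def by blast
qed

end

theorem corollary6p3:
  fixes p q r :: nat
  assumes "prime p" and "prime q" and "odd p" and "odd q" and "q dvd p - 1"
    and "r mod p \<noteq> 1" and "r ^ q mod p = 1"
  shows "\<not> tensor_equivalent_Rep (TYPE('k::alg_closed_field_char_0))
            (sd_carrier p q) (sd_mult p q r r) sd_one
            (sd_carrier p q) (sd_mult p q r (r ^ (q - 1))) sd_one"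
proof
  assume "tensor_equivalent_Rep (TYPE('k::alg_closed_field_char_0))
            (sd_carrier p q) (sd_mult p q r r) sd_one
            (sd_carrier p q) (sd_mult p q r (r ^ (q - 1))) sd_one"
  then obtain F :: "(nat \<times> nat \<times> nat, 'k) rep \<Rightarrow> (nat \<times> nat \<times> nat, 'k) rep" and Fm J \<phi> where
    F: "tensor_equivalence (sd_carrier p q) (sd_mult p q r r) sd_one
          (sd_carrier p q) (sd_mult p q r (r ^ (q - 1))) sd_one F Fm J \<phi>"
    unfolding tensor_equivalent_Rep_def by blast
  obtain z :: 'k where z: "\<forall>k. z ^ k = 1 \<longleftrightarrow> p dvd k"
    using exists_primitive_root_of_unity[OF assms(1)] by blast
  interpret pq_rep p q r z
    using assms z prime_gt_0_nat[OF assms(1)] by unfold_locales auto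
  interpret E: tensor_equiv G mult_G sd_one G mult_G' sd_one F Fm J \<phi>
    using F by unfold_locales (simp add: s_def)
  show False
    using E.separated_triple_map[OF separated_triple_induced] no_separated_triple by blast
qed

end
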